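(* Let $\lambda_1,\lambda_2>0$ and $\nu_1,\nu_2\in(0,1)$. Let $\{N_{\nu_1,\lambda_1}(t):t\geq0\}$ and $\{N_{\nu_2,\lambda_2}(t):t\geq0\}$ be two independent fractional Poisson processes and let $Y_{\underline{\nu},\underline{\lambda}}(t):=N_{\nu_1,\lambda_1}(t)-N_{\nu_2,\lambda_2}(t)$ (the fractional Skellam process of type 1). Define $$\Psi^{(1)}_{\underline{\nu},\underline{\lambda}}(\theta):=\begin{cases}(\lambda_1(e^\theta-1))^{1/\nu_1} & \text{if } \theta\geq0,\\ (\lambda_2(e^{-\theta}-1))^{1/\nu_2} & \text{if } \theta<0.\end{cases}$$ Then the family $\left\{\frac{Y_{\underline{\nu},\underline{\lambda}}(t)}{t}:t>0\right\}$ satisfies the large deviation principle (as $t\to\infty$) with speed $v_t=t$ and good rate function $$I^{(1)}_{\mathrm{LD}}(x):=\sup_{\theta\in\mathbb{R}}\{\theta x-\Psi^{(1)}_{\underline{\nu},\underline{\lambda}}(\theta)\}.$$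
   Context: For $\nu\in(0,1)$, $\{L_\nu(t):t\ge0\}$ denotes the inverse of a $\nu$-stable subordinator $\{D_\nu(s):s\geq0\}$ (with $\mathbb{E}[e^{-uD_\nu(s)}]=e^{-su^\nu}$), i.e. $L_\nu(t)=\inf\{s\geq0:D_\nu(s)>t\}$; its moment generating function is $\mathbb{E}[e^{\theta L_\nu(t)}]=E_\nu(\theta t^\nu)$ for all $\theta\in\mathbb{R}$, where $E_\nu(x)=\sum_{k\ge0}x^k/\Gamma(\nu k+1)$ is the Mittag-Leffler function. The fractional Poisson process with parameters $\nu\in(0,1)$, $\lambda>0$ is $N_{\nu,\lambda}(t):=N_\lambda(L_\nu(t))$, where $\{N_\lambda(t)\}$ is a Poisson process with intensity $\lambda$ independent of $\{L_\nu(t)\}$. A family of real random variables $\{Z_t:t>0\}$ satisfies the large deviation principle (LDP) with speed $v_t\to\infty$ and rate function $I$ (lower semicontinuous, $[0,\infty]$-valued) if $\limsup_{t\to\infty}\frac{1}{v_t}\log P(Z_t\in C)\leq-\inf_{x\in C}I(x)$ for all closed $C$ and $\liminf_{t\to\infty}\frac{1}{v_t}\log P(Z_t\in O)\geq-\inf_{x\in O}I(x)$ for all open $O$; $I$ is good if all its sublevel sets $\{I\le\beta\}$ are compact. *)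

theory Defs
  imports "HOL-Probability.Probability"
begin

definition indep_increments :: "'a measure \<Rightarrow> (real \<Rightarrow> 'a \<Rightarrow> real) \<Rightarrow> bool" where
  "indep_increments M X \<longleftrightarrow>
     (\<forall>(n::nat) (ts::nat \<Rightarrow> real). 0 \<le> ts 0 \<and> (\<forall>i<n. ts i \<le> ts (Suc i)) \<longrightarrow>
        prob_space.indep_vars M (\<lambda>_. borel) (\<lambda>i \<omega>. X (ts (Suc i)) \<omega> - X (ts i) \<omega>) {..<n})"

definition poisson_process :: "'a measure \<Rightarrow> real \<Rightarrow> (real \<Rightarrow> 'a \<Rightarrow> real) \<Rightarrow> bool" where
  "poisson_process M lam N \<longleftrightarrow>
     prob_space M \<and> 0 < lam \<and>
     (\<forall>t. N t \<in> borel_measurable M) \<and>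
     (\<forall>\<omega>\<in>space M. N 0 \<omega> = 0 \<and> (\<forall>t. N t \<omega> \<in> \<nat>) \<and> mono_on {0..} (\<lambda>t. N t \<omega>) \<and>
        (\<forall>t\<ge>0. continuous (at_right t) (\<lambda>s. N s \<omega>))) \<and>
     indep_increments M N \<and>
     (\<forall>s t (k::nat). 0 \<le> s \<and> s < t \<longrightarrow>
        measure M {\<omega>\<in>space M. N t \<omega> - N s \<omega> = real k}
          = (lam * (t - s)) ^ k / fact k * exp (- (lam * (t - s))))"

definition stable_subordinator :: "'a measure \<Rightarrow> real \<Rightarrow> (real \<Rightarrow> 'a \<Rightarrow> real) \<Rightarrow> bool" where
  "stable_subordinator M nu D \<longleftrightarrow>
     prob_space M \<and>
     (\<forall>s. D s \<in> borel_measurable M) \<and>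
     (\<forall>\<omega>\<in>space M. D 0 \<omega> = 0 \<and> mono_on {0..} (\<lambda>s. D s \<omega>) \<and>
        (\<forall>s\<ge>0. continuous (at_right s) (\<lambda>r. D r \<omega>))) \<and>
     indep_increments M D \<and>
     (\<forall>s h. 0 \<le> s \<and> 0 \<le> h \<longrightarrow>
        distr M borel (\<lambda>\<omega>. D (s + h) \<omega> - D s \<omega>) = distr M borel (D h)) \<and>
     (\<forall>s u. 0 \<le> s \<and> 0 \<le> u \<longrightarrow>
        prob_space.expectation M (\<lambda>\<omega>. exp (- u * D s \<omega>)) = exp (- s * u powr nu))"

definition inverse_subordinator :: "(real \<Rightarrow> 'a \<Rightarrow> real) \<Rightarrow> real \<Rightarrow> 'a \<Rightarrow> real" where
  "inverse_subordinator D t \<omega> = Inf {s. 0 \<le> s \<and> D s \<omega> > t}"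

definition elog :: "real \<Rightarrow> ereal" where
  "elog p = (if p \<le> 0 then - \<infinity> else ereal (ln p))"

text \<open>Large deviation principle for {Z t} as t \<rightarrow> \<infinity> with speed v and rate function I,
  I being [0,\<infinity>]-valued and lower semicontinuous (closed sublevel sets).\<close>
definition LDP :: "'a measure \<Rightarrow> (real \<Rightarrow> 'a \<Rightarrow> real) \<Rightarrow> (real \<Rightarrow> real) \<Rightarrow> (real \<Rightarrow> ereal) \<Rightarrow> bool" where
  "LDP M Z v I \<longleftrightarrow>
     (\<forall>x. 0 \<le> I x) \<and> (\<forall>\<beta>::ereal. closed {x. I x \<le> \<beta>}) \<and>
     (\<forall>C. closed C \<longrightarrow>
        Limsup at_top (\<lambda>t. ereal (1 / v t) * elog (measure M {\<omega>\<in>space M. Z t \<omega> \<in> C}))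
          \<le> - (INF x\<in>C. I x)) \<and>
     (\<forall>U. open U \<longrightarrow>
        Liminf at_top (\<lambda>t. ereal (1 / v t) * elog (measure M {\<omega>\<in>space M. Z t \<omega> \<in> U}))
          \<ge> - (INF x\<in>U. I x))"

definition good_rate_function :: "(real \<Rightarrow> ereal) \<Rightarrow> bool" where
  "good_rate_function I \<longleftrightarrow> (\<forall>\<beta>::real. compact {x. I x \<le> ereal \<beta>})"

definition Psi1 :: "real \<Rightarrow> real \<Rightarrow> real \<Rightarrow> real \<Rightarrow> real \<Rightarrow> real" where
  "Psi1 nu1 nu2 lam1 lam2 \<theta> =
     (if \<theta> \<ge> 0 then (lam1 * (exp \<theta> - 1)) powr (1 / nu1)
      else (lam2 * (exp (- \<theta>) - 1)) powr (1 / nu2))"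

definition I_LD1 :: "real \<Rightarrow> real \<Rightarrow> real \<Rightarrow> real \<Rightarrow> real \<Rightarrow> ereal" where
  "I_LD1 nu1 nu2 lam1 lam2 x = (SUP \<theta>::real. ereal (\<theta> * x - Psi1 nu1 nu2 lam1 lam2 \<theta>))"

end

theory Submission
  imports Defs
begin

text \<open>By a Gaertner-Ellis argument it suffices that \<open>ln (E exp (\<theta> Y t)) / t\<close> tends to
  \<open>\<Psi> \<theta>\<close> for every \<open>\<theta>\<close>, where \<open>\<Psi> = Psi1 \<dots>\<close> is nonnegative and differentiable with derivative
  onto \<open>\<real>\<close>: the upper bound comes from Chernoff bounds, the lower bound from exponential tilting
  at the \<open>\<theta>\<close> with \<open>\<Psi>' \<theta> = x\<close>.

  Given the subordinators, the independent Poisson processes are evaluated at the times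
  \<open>L\<^sub>1 t\<close> and \<open>L\<^sub>2 t\<close>, and \<open>E exp (\<theta> N s) = exp (\<lambda> s (exp \<theta> - 1))\<close>, so the moment
  factors into terms \<open>E exp (c L t)\<close> with \<open>c = \<lambda> (exp (\<plusminus>\<theta>) - 1)\<close>. For an inverse
  \<open>\<nu>\<close>-stable subordinator, \<open>P (L t \<ge> s) = P (D s \<le> t)\<close> and \<open>E exp (- u D s) = exp (- s u\<^sup>\<nu>)\<close>
  give \<open>E exp (c L t) = exp (t ((max 0 c) powr (1 / \<nu>) + o(1)))\<close>: Chernoff bounds from above,
  tilting \<open>D s\<close> at a time \<open>s\<close> proportional to \<open>t\<close> from below. To evaluate the Poisson
  processes at deterministic times only, \<open>L t\<close> is replaced by the two consecutive integers that
  bracket it, which changes the moments by bounded factors.\<close>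

section \<open>The limiting cumulant generating function\<close>

definition Psi_branch :: "real \<Rightarrow> real \<Rightarrow> real \<Rightarrow> real" where
  "Psi_branch p l \<theta> = (l * (exp \<theta> - 1)) powr p"

definition Psi_branch_deriv :: "real \<Rightarrow> real \<Rightarrow> real \<Rightarrow> real" where
  "Psi_branch_deriv p l \<theta> = p * l * exp \<theta> * (l * (exp \<theta> - 1)) powr (p - 1)"

lemma Psi_branch_has_derivative:
  assumes "0 < l" "0 < \<theta>"
  shows "(Psi_branch p l has_real_derivative Psi_branch_deriv p l \<theta>) (at \<theta>)"
proof -
  have pos: "0 < l * (exp \<theta> - 1)" using assms by simp
  have "((\<lambda>x. l * (exp x - 1)) has_real_derivative l * exp \<theta>) (at \<theta>)"
    by (auto intro!: derivative_eq_intros)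
  from DERIV_powr[OF this pos DERIV_const[of p]]
  have "((\<lambda>x. (l * (exp x - 1)) powr p) has_real_derivative Psi_branch_deriv p l \<theta>) (at \<theta>)"
    using pos by (simp add: Psi_branch_deriv_def powr_diff field_simps)
  then show ?thesis unfolding Psi_branch_def .
qed

lemma Psi_branch_deriv_0: "1 < p \<Longrightarrow> Psi_branch_deriv p l 0 = 0"
  by (simp add: Psi_branch_deriv_def)

lemma continuous_on_Psi_branch_deriv:
  assumes "0 < l" "1 < p"
  shows "continuous_on {0..} (Psi_branch_deriv p l)"
  unfolding Psi_branch_deriv_def
  by (intro continuous_intros continuous_on_powr') (use assms in auto)

lemma Psi_branch_deriv_unbounded:
  assumes "0 < l" "1 < p"
  shows "\<exists>\<theta>\<ge>0. x \<le> Psi_branch_deriv p l \<theta>"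
proof -
  define \<theta> where "\<theta> = ln (1 + 1/l) + \<bar>x\<bar> / (p * l)"
  have "0 \<le> \<theta>" using assms unfolding \<theta>_def by simp
  have "1 + 1/l \<le> exp \<theta>"
    using assms by (simp add: \<theta>_def exp_add add_pos_pos)
  then have "1 \<le> l * (exp \<theta> - 1)" using assms by (simp add: field_simps)
  then have "1 \<le> (l * (exp \<theta> - 1)) powr (p - 1)" using assms by (simp add: ge_one_powr_ge_zero)
  moreover have "\<bar>x\<bar> \<le> p * l * exp \<theta>"
  proof -
    have "\<bar>x\<bar> / (p * l) \<le> \<theta>"
      using assms by (simp add: \<theta>_def ln_ge_zero)
    also have "\<dots> \<le> exp \<theta>"
      using exp_ge_add_one_self[of \<theta>] by linarith
    finally have "\<bar>x\<bar> / (p * l) \<le> exp \<theta>" .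
    then show ?thesis using assms by (simp add: field_simps)
  qed
  ultimately have "x \<le> p * l * exp \<theta> * (l * (exp \<theta> - 1)) powr (p - 1)"
    using assms mult_le_cancel_left1[of "p * l * exp \<theta>"] by (smt (verit) mult_pos_pos exp_gt_zero)
  then show ?thesis using \<open>0 \<le> \<theta>\<close> unfolding Psi_branch_deriv_def by blast
qed

lemma Psi_branch_deriv_surj:
  assumes "0 < l" "1 < p" "0 < x"
  shows "\<exists>\<theta>>0. (Psi_branch p l has_real_derivative x) (at \<theta>)"
proof -
  obtain b where b: "0 \<le> b" "x \<le> Psi_branch_deriv p l b"
    using Psi_branch_deriv_unbounded assms(1,2) by blast
  have "continuous_on {0..b} (Psi_branch_deriv p l)"
    using continuous_on_Psi_branch_deriv[OF assms(1,2)] by (rule continuous_on_subset) auto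
  moreover have "Psi_branch_deriv p l 0 \<le> x" using Psi_branch_deriv_0 assms(2,3) by simp
  ultimately obtain \<theta> where \<theta>: "0 \<le> \<theta>" "Psi_branch_deriv p l \<theta> = x"
    using IVT'[of "Psi_branch_deriv p l" 0 x b] b by blast
  then have "0 < \<theta>" using Psi_branch_deriv_0 assms(2,3) by (cases "\<theta> = 0") auto
  then show ?thesis using Psi_branch_has_derivative[OF assms(1) \<open>0 < \<theta>\<close>, of p] \<theta>(2) by auto
qed

lemma Psi_branch_slope_0:
  assumes "0 < l" "1 < p"
  shows "((\<lambda>h. Psi_branch p l h / h) \<longlongrightarrow> 0) (at_right 0)"
proof -
  have "DERIV exp (0::real) :> exp 0" by (rule DERIV_exp)
  then have "((\<lambda>h. (exp (0 + h) - exp 0) / h) \<longlongrightarrow> exp (0::real)) (at 0)"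
    unfolding DERIV_def .
  then have "((\<lambda>h. l * ((exp h - 1) / h)) \<longlongrightarrow> l * 1) (at_right 0)"
    by (intro tendsto_mult tendsto_const) (simp add: filterlim_at_split)
  moreover have "((\<lambda>h. (l * (exp h - 1)) powr (p - 1)) \<longlongrightarrow> 0) (at_right 0)"
  proof (rule tendsto_zero_powrI[where b = "p - 1"])
    have "((\<lambda>h. l * (exp h - 1)) \<longlongrightarrow> l * (exp 0 - 1)) (at_right 0)"
      by (intro tendsto_intros)
    then show "((\<lambda>h. l * (exp h - 1)) \<longlongrightarrow> 0) (at_right 0)" by simp
    show "\<forall>\<^sub>F h in at_right 0. 0 \<le> l * (exp h - 1)"
      using assms by (auto simp: eventually_at_right_less intro: eventually_mono[OF eventually_at_right_less])
  qed (use assms in auto)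
  ultimately have "((\<lambda>h. l * ((exp h - 1) / h) * (l * (exp h - 1)) powr (p - 1)) \<longlongrightarrow> 0) (at_right 0)"
    using tendsto_mult by fastforce
  moreover have "\<forall>\<^sub>F h in at_right 0. l * ((exp h - 1) / h) * (l * (exp h - 1)) powr (p - 1) = Psi_branch p l h / h"
    using eventually_at_right_less[of 0]
  proof (rule eventually_mono)
    fix h :: real assume "0 < h"
    then have "0 < l * (exp h - 1)" using assms by simp
    then have "(l * (exp h - 1)) powr (p - 1) = (l * (exp h - 1)) powr p / (l * (exp h - 1))"
      using powr_diff[of "l * (exp h - 1)" p 1] by simp
    then show "l * ((exp h - 1) / h) * (l * (exp h - 1)) powr (p - 1) = Psi_branch p l h / h"
      using \<open>0 < h\<close> \<open>0 < l * (exp h - 1)\<close> by (simp add: Psi_branch_def)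
  qed
  ultimately show ?thesis by (rule Lim_transform_eventually)
qed

lemma Psi1_eq_Psi_branch: "0 \<le> \<theta> \<Longrightarrow> Psi1 n1 n2 l1 l2 \<theta> = Psi_branch (1/n1) l1 \<theta>"
  by (simp add: Psi1_def Psi_branch_def)

lemma Psi1_minus: "Psi1 n1 n2 l1 l2 (- \<theta>) = Psi1 n2 n1 l2 l1 \<theta>"
  by (auto simp: Psi1_def)

lemma Psi1_nonneg: "0 \<le> Psi1 n1 n2 l1 l2 \<theta>"
  by (simp add: Psi1_def)

lemma Psi1_has_derivative_pos:
  assumes "0 < l1" "0 < n1" "n1 < 1" "0 < x"
  shows "\<exists>\<theta>. (Psi1 n1 n2 l1 l2 has_real_derivative x) (at \<theta>)"
proof -
  have "1 < 1/n1" using assms by (simp add: field_simps)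
  then obtain \<theta> where "\<theta> > 0" "(Psi_branch (1/n1) l1 has_real_derivative x) (at \<theta>)"
    using Psi_branch_deriv_surj assms by blast
  then have "(Psi1 n1 n2 l1 l2 has_real_derivative x) (at \<theta>)"
    by (rule_tac has_field_derivative_transform_within_open[of _ _ _ "{0<..}"])
       (auto simp: Psi1_eq_Psi_branch)
  then show ?thesis ..
qed

lemma Psi1_has_derivative_0:
  assumes "0 < l1" "0 < n1" "n1 < 1" "0 < l2" "0 < n2" "n2 < 1"
  shows "(Psi1 n1 n2 l1 l2 has_real_derivative 0) (at 0)"
  unfolding DERIV_def
proof (rule filterlim_split_at)
  have "1 < 1/n1" "1 < 1/n2" using assms by (simp_all add: field_simps)
  note slopes = Psi_branch_slope_0[OF assms(1) this(1)] Psi_branch_slope_0[OF assms(4) this(2)]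
  have "\<forall>\<^sub>F h in at_right 0. Psi_branch (1/n1) l1 h / h = (Psi1 n1 n2 l1 l2 (0 + h) - Psi1 n1 n2 l1 l2 0) / h"
    by (rule eventually_mono[OF eventually_at_right_less]) (simp add: Psi1_def Psi_branch_def)
  with slopes(1) show "((\<lambda>h. (Psi1 n1 n2 l1 l2 (0 + h) - Psi1 n1 n2 l1 l2 0) / h) \<longlongrightarrow> 0) (at_right 0)"
    by (rule tendsto_cong[THEN iffD1, rotated])
  have "((\<lambda>h. - (Psi_branch (1/n2) l2 h / h)) \<longlongrightarrow> - 0) (at_right 0)"
    using slopes(2) by (rule tendsto_minus)
  then show "((\<lambda>h. (Psi1 n1 n2 l1 l2 (0 + h) - Psi1 n1 n2 l1 l2 0) / h) \<longlongrightarrow> 0) (at_left 0)"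
    unfolding filterlim_at_left_to_right minus_zero
  proof (rule tendsto_cong[THEN iffD1, rotated])
    show "\<forall>\<^sub>F h in at_right 0. - (Psi_branch (1/n2) l2 h / h) = (Psi1 n1 n2 l1 l2 (0 + - h) - Psi1 n1 n2 l1 l2 0) / - h"
      by (rule eventually_mono[OF eventually_at_right_less]) (simp add: Psi1_def Psi_branch_def)
  qed
qed

lemma Psi1_deriv_surj:
  assumes "0 < l1" "0 < n1" "n1 < 1" "0 < l2" "0 < n2" "n2 < 1"
  shows "\<exists>\<theta>. (Psi1 n1 n2 l1 l2 has_real_derivative x) (at \<theta>)"
proof (cases x "0::real" rule: linorder_cases)
  case less
  then obtain \<theta> where "(Psi1 n2 n1 l2 l1 has_real_derivative - x) (at \<theta>)"
    using Psi1_has_derivative_pos[OF assms(4-6), of "- x"] by auto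
  then have "((\<lambda>\<theta>. Psi1 n1 n2 l1 l2 (- \<theta>)) has_real_derivative - x) (at \<theta>)"
    by (simp add: Psi1_minus)
  then have "(Psi1 n1 n2 l1 l2 has_real_derivative x) (at (- \<theta>))"
    using DERIV_mirror[of "Psi1 n1 n2 l1 l2" x \<theta>] by simp
  then show ?thesis ..
qed (use Psi1_has_derivative_pos[OF assms(1-3)] Psi1_has_derivative_0[OF assms] in auto)

section \<open>A Gaertner-Ellis theorem\<close>

lemma exp_neg_le_inverse:
  fixes c m t :: real
  assumes "0 < c" "0 < m" "m / c \<le> t"
  shows "exp (- t * c) \<le> 1 / m"
proof -
  have "m \<le> t * c" using assms by (simp add: field_simps)
  also have "\<dots> \<le> exp (t * c)" using exp_ge_add_one_self[of "t * c"] by linarith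
  finally show ?thesis using assms(2) by (simp add: exp_minus field_simps)
qed

lemma indicator_exp_tilt:
  fixes Y :: "'a \<Rightarrow> real"
  assumes "Y \<in> borel_measurable M" "integrable M (\<lambda>\<omega>. exp ((\<theta> + \<eta>) * Y \<omega>))"
    and "A \<in> sets M" "\<And>\<omega>. \<omega> \<in> A \<Longrightarrow> \<eta> * s \<le> \<eta> * Y \<omega>"
  shows "integrable M (\<lambda>\<omega>. indicator A \<omega> * exp (\<theta> * Y \<omega>))"
    and "(\<integral>\<omega>. indicator A \<omega> * exp (\<theta> * Y \<omega>) \<partial>M) \<le> exp (- \<eta> * s) * (\<integral>\<omega>. exp ((\<theta> + \<eta>) * Y \<omega>) \<partial>M)"
proof -
  have pw: "indicator A \<omega> * exp (\<theta> * Y \<omega>) \<le> exp (- \<eta> * s) * exp ((\<theta> + \<eta>) * Y \<omega>)" for \<omega>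
  proof (cases "\<omega> \<in> A")
    case True
    then have "\<theta> * Y \<omega> \<le> - \<eta> * s + (\<theta> + \<eta>) * Y \<omega>" using assms(4)[of \<omega>] by (simp add: algebra_simps)
    then show ?thesis using True by (simp add: exp_add[symmetric])
  qed simp
  have int: "integrable M (\<lambda>\<omega>. exp (- \<eta> * s) * exp ((\<theta> + \<eta>) * Y \<omega>))"
    using assms(2) by simp
  show int_A: "integrable M (\<lambda>\<omega>. indicator A \<omega> * exp (\<theta> * Y \<omega>))"
    by (rule Bochner_Integration.integrable_bound[OF int]) (use assms pw in auto)
  show "(\<integral>\<omega>. indicator A \<omega> * exp (\<theta> * Y \<omega>) \<partial>M) \<le> exp (- \<eta> * s) * (\<integral>\<omega>. exp ((\<theta> + \<eta>) * Y \<omega>) \<partial>M)"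
    using integral_mono[OF int_A int pw] by simp
qed

lemma (in prob_space) chernoff_bound:
  fixes Y :: "'a \<Rightarrow> real"
  assumes "Y \<in> borel_measurable M" "integrable M (\<lambda>\<omega>. exp (\<theta> * Y \<omega>))"
    and "A \<in> sets M" "\<And>\<omega>. \<omega> \<in> A \<Longrightarrow> \<theta> * s \<le> \<theta> * Y \<omega>"
  shows "prob A \<le> exp (- \<theta> * s) * (\<integral>\<omega>. exp (\<theta> * Y \<omega>) \<partial>M)"
proof -
  have "prob A = (\<integral>\<omega>. indicator A \<omega> * exp (0 * Y \<omega>) \<partial>M)"
    using assms(3) by simp
  also have "\<dots> \<le> exp (- \<theta> * s) * (\<integral>\<omega>. exp ((0 + \<theta>) * Y \<omega>) \<partial>M)"
    by (rule indicator_exp_tilt(2)) (use assms in auto)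
  finally show ?thesis by simp
qed

lemma (in prob_space) integral_exp_pos:
  assumes "integrable M (\<lambda>\<omega>. exp (f \<omega> :: real))"
  shows "0 < (\<integral>\<omega>. exp (f \<omega>) \<partial>M)"
proof -
  have "(\<integral>\<omega>. exp (f \<omega>) \<partial>M) \<noteq> 0"
  proof
    assume "(\<integral>\<omega>. exp (f \<omega>) \<partial>M) = 0"
    then have "AE \<omega> in M. exp (f \<omega>) = 0"
      using integral_nonneg_eq_0_iff_AE[OF assms] by simp
    then show False by simp
  qed
  then show ?thesis by (simp add: order_less_le)
qed

lemma (in prob_space) exp_moment_le_local_plus_tails:
  fixes Z :: "'a \<Rightarrow> real"
  assumes [measurable]: "Z \<in> borel_measurable M" and "0 < t" "0 \<le> \<eta>"
    and int: "integrable M (\<lambda>\<omega>. exp (\<theta> * Z \<omega>))" "integrable M (\<lambda>\<omega>. exp ((\<theta> + \<eta>) * Z \<omega>))"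
      "integrable M (\<lambda>\<omega>. exp ((\<theta> + - \<eta>) * Z \<omega>))"
  shows "(\<integral>\<omega>. exp (\<theta> * Z \<omega>) \<partial>M)
    \<le> prob {\<omega>\<in>space M. \<bar>Z \<omega> / t - x\<bar> < \<delta>} * exp (t * (\<theta> * x + \<bar>\<theta>\<bar> * \<delta>))
      + exp (- t * (\<eta> * x + \<eta> * \<delta>)) * (\<integral>\<omega>. exp ((\<theta> + \<eta>) * Z \<omega>) \<partial>M)
      + exp (- t * (- \<eta> * x + \<eta> * \<delta>)) * (\<integral>\<omega>. exp ((\<theta> + - \<eta>) * Z \<omega>) \<partial>M)"
proof -
  define A where "A = {\<omega>\<in>space M. \<bar>Z \<omega> / t - x\<bar> < \<delta>}"
  define above where "above = {\<omega>\<in>space M. t * (x + \<delta>) \<le> Z \<omega>}"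
  define below where "below = {\<omega>\<in>space M. Z \<omega> \<le> t * (x - \<delta>)}"
  have [measurable]: "A \<in> sets M" "above \<in> sets M" "below \<in> sets M"
    unfolding A_def above_def below_def by measurable
  define c where "c = exp (t * (\<theta> * x + \<bar>\<theta>\<bar> * \<delta>))"
  have pw: "exp (\<theta> * Z \<omega>) \<le> indicator A \<omega> * c + indicator above \<omega> * exp (\<theta> * Z \<omega>)
      + indicator below \<omega> * exp (\<theta> * Z \<omega>)" if \<omega>: "\<omega> \<in> space M" for \<omega>
  proof (cases "\<omega> \<in> A")
    case True
    have "\<theta> * (Z \<omega> / t - x) \<le> \<bar>\<theta>\<bar> * \<bar>Z \<omega> / t - x\<bar>"
      by (metis abs_ge_self abs_mult)
    also have "\<dots> \<le> \<bar>\<theta>\<bar> * \<delta>"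
      using True by (intro mult_left_mono) (auto simp: A_def)
    finally have "t * (\<theta> * (Z \<omega> / t - x)) \<le> t * (\<bar>\<theta>\<bar> * \<delta>)"
      using \<open>0 < t\<close> by (intro mult_left_mono) auto
    then have "\<theta> * Z \<omega> \<le> t * (\<theta> * x + \<bar>\<theta>\<bar> * \<delta>)"
      using \<open>0 < t\<close> by (simp add: algebra_simps)
    then show ?thesis using True by (auto simp: c_def indicator_def)
  next
    case False
    then have "x + \<delta> \<le> Z \<omega> / t \<or> Z \<omega> / t \<le> x - \<delta>"
      using \<omega> by (auto simp: A_def)
    then have "\<omega> \<in> above \<or> \<omega> \<in> below"
      using \<omega> \<open>0 < t\<close> by (auto simp: above_def below_def field_simps)
    then show ?thesis by (auto simp: indicator_def c_def)
  qed
  have "\<eta> * (t * (x + \<delta>)) \<le> \<eta> * Z \<omega>" if "\<omega> \<in> above" for \<omega>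
    using that \<open>0 \<le> \<eta>\<close> by (auto simp: above_def intro: mult_left_mono)
  note tilt_above = indicator_exp_tilt[OF assms(1) int(2) \<open>above \<in> sets M\<close> this]
  have "- \<eta> * (t * (x - \<delta>)) \<le> - \<eta> * Z \<omega>" if "\<omega> \<in> below" for \<omega>
    using that \<open>0 \<le> \<eta>\<close> by (auto simp: below_def intro: mult_left_mono)
  note tilt_below = indicator_exp_tilt[OF assms(1) int(3) \<open>below \<in> sets M\<close> this]
  have "integrable M (indicator A :: 'a \<Rightarrow> real)"
    by (rule integrable_real_indicator) (auto simp: less_top[symmetric])
  then have int_A: "integrable M (\<lambda>\<omega>. indicator A \<omega> * c)" by simp
  have "(\<integral>\<omega>. exp (\<theta> * Z \<omega>) \<partial>M) \<le> (\<integral>\<omega>. indicator A \<omega> * c + indicator above \<omega> * exp (\<theta> * Z \<omega>)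
      + indicator below \<omega> * exp (\<theta> * Z \<omega>) \<partial>M)"
    by (intro integral_mono_AE int Bochner_Integration.integrable_add int_A tilt_above(1) tilt_below(1) AE_I2 pw)
  also have "\<dots> = prob A * c + (\<integral>\<omega>. indicator above \<omega> * exp (\<theta> * Z \<omega>) \<partial>M)
      + (\<integral>\<omega>. indicator below \<omega> * exp (\<theta> * Z \<omega>) \<partial>M)"
    using int_A tilt_above(1) tilt_below(1) by simp
  also have "\<dots> \<le> prob A * c + exp (- \<eta> * (t * (x + \<delta>))) * (\<integral>\<omega>. exp ((\<theta> + \<eta>) * Z \<omega>) \<partial>M)
      + exp (- (- \<eta>) * (t * (x - \<delta>))) * (\<integral>\<omega>. exp ((\<theta> + - \<eta>) * Z \<omega>) \<partial>M)"
    using tilt_above(2) tilt_below(2) by (intro add_mono order.refl)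
  finally show ?thesis by (simp add: A_def c_def algebra_simps)
qed

lemma DERIV_secant_bound:
  assumes "(f has_real_derivative x) (at \<theta>)" "0 < \<delta>"
  shows "\<exists>\<eta>>0. \<forall>h\<in>{\<eta>, - \<eta>}. f (\<theta> + h) - f \<theta> < h * x + \<bar>h\<bar> * \<delta>"
proof -
  have "\<forall>\<^sub>F h in at 0. dist ((f (\<theta> + h) - f \<theta>) / h) x < \<delta>"
    using assms unfolding DERIV_def by (intro tendstoD) auto
  then obtain d where d: "d > 0" "\<And>h. h \<noteq> 0 \<Longrightarrow> \<bar>h\<bar> < d \<Longrightarrow> \<bar>(f (\<theta> + h) - f \<theta>) / h - x\<bar> < \<delta>"
    unfolding eventually_at by (auto simp: dist_real_def)
  have "f (\<theta> + h) - f \<theta> < h * x + \<bar>h\<bar> * \<delta>" if "h \<noteq> 0" "\<bar>h\<bar> < d" for h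
  proof -
    have "\<bar>(f (\<theta> + h) - f \<theta> - h * x) / h\<bar> < \<delta>"
      using d(2)[OF that] that by (simp add: diff_divide_distrib)
    then show ?thesis using that by (simp add: abs_less_iff abs_if field_simps split: if_splits)
  qed
  from this[of "d / 2"] this[of "- d / 2"] show ?thesis
    using d(1) by (intro exI[of _ "d / 2"]) auto
qed

definition legendre_transform :: "(real \<Rightarrow> real) \<Rightarrow> real \<Rightarrow> ereal" where
  "legendre_transform \<Lambda> x = (SUP \<theta>. ereal (\<theta> * x - \<Lambda> \<theta>))"

lemma legendre_transform_ge: "ereal (\<theta> * x - \<Lambda> \<theta>) \<le> legendre_transform \<Lambda> x"
  unfolding legendre_transform_def by (rule SUP_upper) auto

lemma legendre_transform_nonneg: "\<Lambda> 0 = 0 \<Longrightarrow> 0 \<le> legendre_transform \<Lambda> x"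
  using legendre_transform_ge[of 0 x \<Lambda>] by (simp add: zero_ereal_def)

lemma legendre_transform_at_0: "(\<And>\<theta>. 0 \<le> \<Lambda> \<theta>) \<Longrightarrow> \<Lambda> 0 = 0 \<Longrightarrow> legendre_transform \<Lambda> 0 = 0"
  unfolding legendre_transform_def by (intro antisym SUP_least SUP_upper2[of 0]) auto

lemma closed_legendre_transform_sublevel: "closed {x. legendre_transform \<Lambda> x \<le> \<beta>}"
proof -
  have "{x. legendre_transform \<Lambda> x \<le> \<beta>} = (\<Inter>\<theta>. {x. ereal (\<theta> * x - \<Lambda> \<theta>) \<le> \<beta>})"
    unfolding legendre_transform_def by (auto simp: SUP_le_iff)
  moreover have "closed {x. ereal (\<theta> * x - \<Lambda> \<theta>) \<le> \<beta>}" for \<theta>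
    by (intro closed_Collect_le continuous_intros)
  ultimately show ?thesis by auto
qed

lemma good_rate_function_legendre_transform: "good_rate_function (legendre_transform \<Lambda>)"
  unfolding good_rate_function_def
proof
  fix \<beta> :: real
  have "{x. legendre_transform \<Lambda> x \<le> ereal \<beta>} \<subseteq> {- (\<beta> + \<Lambda> (-1)) .. \<beta> + \<Lambda> 1}"
  proof
    fix x assume "x \<in> {x. legendre_transform \<Lambda> x \<le> ereal \<beta>}"
    then have "legendre_transform \<Lambda> x \<le> ereal \<beta>" by simp
    then have "ereal (1 * x - \<Lambda> 1) \<le> ereal \<beta>" "ereal ((-1) * x - \<Lambda> (-1)) \<le> ereal \<beta>"
      using order.trans[OF legendre_transform_ge] by blast+
    then show "x \<in> {- (\<beta> + \<Lambda> (-1)) .. \<beta> + \<Lambda> 1}" by simp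
  qed
  then have "bounded {x. legendre_transform \<Lambda> x \<le> ereal \<beta>}"
    by (rule bounded_subset[rotated]) simp
  then show "compact {x. legendre_transform \<Lambda> x \<le> ereal \<beta>}"
    using closed_legendre_transform_sublevel by (simp add: compact_eq_bounded_closed)
qed

lemma legendre_transform_witness:
  assumes "\<And>\<theta>. 0 \<le> \<Lambda> \<theta>" "\<Lambda> 0 = 0" "ereal y < legendre_transform \<Lambda> a"
  shows "\<exists>\<theta>. 0 \<le> \<theta> * a \<and> y < \<theta> * a - \<Lambda> \<theta>"
proof -
  obtain \<theta> where \<theta>: "y < \<theta> * a - \<Lambda> \<theta>"
    using assms(3) unfolding legendre_transform_def less_SUP_iff by auto
  show ?thesis
  proof (cases "0 \<le> \<theta> * a")
    case False
    then show ?thesis using \<theta> assms(1)[of \<theta>] assms(2) by (intro exI[of _ 0]) auto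
  qed (use \<theta> in blast)
qed

lemma eventually_add_exp_le:
  fixes p q :: "real \<Rightarrow> real"
  assumes "0 < g\<^sub>1" "0 < g\<^sub>2"
    and "\<forall>\<^sub>F t in at_top. p t \<le> exp (- t * (y + g\<^sub>1))" "\<forall>\<^sub>F t in at_top. q t \<le> exp (- t * (y + g\<^sub>2))"
  shows "\<forall>\<^sub>F t in at_top. p t + q t \<le> exp (- t * y)"
proof -
  define g where "g = min g\<^sub>1 g\<^sub>2"
  have "0 < g" using assms(1,2) by (simp add: g_def)
  show ?thesis
    using assms(3,4) eventually_ge_at_top[of 0] eventually_ge_at_top[of "2 / g"]
  proof eventually_elim
    case (elim t)
    have "exp (- t * (y + g\<^sub>1)) \<le> exp (- t * (y + g))" "exp (- t * (y + g\<^sub>2)) \<le> exp (- t * (y + g))"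
      using elim(3) by (auto simp: g_def intro: mult_left_mono)
    then have "p t + q t \<le> exp (- t * (y + g)) + exp (- t * (y + g))"
      using elim(1,2) by linarith
    also have "\<dots> = exp (- t * y) * (2 * exp (- t * g))"
      by (simp add: exp_add[symmetric] algebra_simps)
    also have "\<dots> \<le> exp (- t * y)"
      using exp_neg_le_inverse[OF \<open>0 < g\<close>, of 2 t] elim(4) by simp
    finally show ?case .
  qed
qed

lemma Limsup_elog_le:
  assumes "\<And>y. ereal y < J \<Longrightarrow> \<forall>\<^sub>F t in at_top. p t \<le> exp (- t * y)"
  shows "Limsup at_top (\<lambda>t. ereal (1 / t) * elog (p t)) \<le> - J"
proof (rule dense_ge)
  fix z assume z: "- J < z"
  show "Limsup at_top (\<lambda>t. ereal (1 / t) * elog (p t)) \<le> z"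
  proof (cases z)
    case (real w)
    then have "- ereal w < J" using ereal_uminus_less_reorder[of J "ereal w"] z by blast
    then have "ereal (- w) < J" by simp
    then have "\<forall>\<^sub>F t in at_top. p t \<le> exp (t * w) \<and> 0 < t"
      using assms[of "- w"] by (intro eventually_conj eventually_gt_at_top) auto
    then have "\<forall>\<^sub>F t in at_top. ereal (1 / t) * elog (p t) \<le> z"
    proof (rule eventually_mono, elim conjE)
      fix t :: real assume p: "p t \<le> exp (t * w)" and t: "0 < t"
      show "ereal (1 / t) * elog (p t) \<le> z"
      proof (cases "p t \<le> 0")
        case False
        then have "ln (p t) \<le> t * w" using p by (metis ln_exp ln_le_cancel_iff not_le exp_gt_zero order.trans)
        then show ?thesis using False real t by (simp add: elog_def divide_le_eq mult.commute)
      qed (use t in \<open>simp add: elog_def\<close>)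
    qed
    then show ?thesis by (rule Limsup_bounded)
  qed (use z in auto)
qed

lemma Liminf_elog_ge:
  assumes "\<And>y. I < ereal y \<Longrightarrow> \<forall>\<^sub>F t in at_top. exp (- t * y) \<le> p t"
  shows "- I \<le> Liminf at_top (\<lambda>t. ereal (1 / t) * elog (p t))"
proof (rule dense_le)
  fix z assume z: "z < - I"
  show "z \<le> Liminf at_top (\<lambda>t. ereal (1 / t) * elog (p t))"
  proof (cases z)
    case (real w)
    then have "I < - ereal w" using ereal_less_uminus_reorder[of "ereal w" I] z by blast
    then have "I < ereal (- w)" by simp
    then have "\<forall>\<^sub>F t in at_top. exp (t * w) \<le> p t \<and> 0 < t"
      using assms[of "- w"] by (intro eventually_conj eventually_gt_at_top) auto
    then have "\<forall>\<^sub>F t in at_top. z \<le> ereal (1 / t) * elog (p t)"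
    proof (rule eventually_mono, elim conjE)
      fix t :: real assume p: "exp (t * w) \<le> p t" and t: "0 < t"
      then have "0 < p t" by (meson exp_gt_zero less_le_trans)
      moreover from this have "t * w \<le> ln (p t)" using p by (simp add: ln_ge_iff)
      ultimately show "z \<le> ereal (1 / t) * elog (p t)"
        using real t by (simp add: elog_def le_divide_eq mult.commute)
    qed
    then show ?thesis by (rule Liminf_bounded)
  qed (use z in auto)
qed

locale cgf_limit = prob_space M for M :: "'a measure" +
  fixes Y :: "real \<Rightarrow> 'a \<Rightarrow> real" and \<Lambda> :: "real \<Rightarrow> real"
  assumes measurable_Y [measurable]: "\<And>t. Y t \<in> borel_measurable M"
    and integrable_exp_Y: "\<And>\<theta>. \<forall>\<^sub>F t in at_top. integrable M (\<lambda>\<omega>. exp (\<theta> * Y t \<omega>))"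
    and cgf_tendsto: "\<And>\<theta>. ((\<lambda>t. ln (\<integral>\<omega>. exp (\<theta> * Y t \<omega>) \<partial>M) / t) \<longlongrightarrow> \<Lambda> \<theta>) at_top"
begin

lemma cgf_limit_0: "\<Lambda> 0 = 0"
  using cgf_tendsto[of 0] by (simp add: prob_space tendsto_const_iff)

lemma eventually_exp_moment_bounds:
  assumes "0 < \<epsilon>"
  shows "\<forall>\<^sub>F t in at_top. 0 < t \<and> integrable M (\<lambda>\<omega>. exp (\<theta> * Y t \<omega>))
    \<and> exp (t * (\<Lambda> \<theta> - \<epsilon>)) \<le> (\<integral>\<omega>. exp (\<theta> * Y t \<omega>) \<partial>M)
    \<and> (\<integral>\<omega>. exp (\<theta> * Y t \<omega>) \<partial>M) \<le> exp (t * (\<Lambda> \<theta> + \<epsilon>))"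
  using eventually_gt_at_top[of 0] integrable_exp_Y[of \<theta>] tendstoD[OF cgf_tendsto[of \<theta>] assms]
proof (eventually_elim)
  case (elim t)
  define m where "m = (\<integral>\<omega>. exp (\<theta> * Y t \<omega>) \<partial>M)"
  have "0 < m" using integral_exp_pos[OF elim(2)] by (simp add: m_def)
  then have "m = exp (t * (ln m / t))" using elim(1) by simp
  moreover have "\<Lambda> \<theta> - \<epsilon> \<le> ln m / t" "ln m / t \<le> \<Lambda> \<theta> + \<epsilon>"
    using elim(3) by (auto simp: m_def dist_real_def)
  ultimately show ?case
    using elim(1,2) by (metis m_def exp_le_cancel_iff mult_le_cancel_left_pos)
qed

lemma prob_half_line_upper_bound:
  assumes "y < \<theta> * a - \<Lambda> \<theta>"
  shows "\<exists>g>0. \<forall>\<^sub>F t in at_top. prob {\<omega>\<in>space M. \<theta> * (t * a) \<le> \<theta> * Y t \<omega>} \<le> exp (- t * (y + g))"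
proof -
  define g where "g = (\<theta> * a - \<Lambda> \<theta> - y) / 2"
  have "0 < g" using assms by (simp add: g_def)
  moreover have "\<forall>\<^sub>F t in at_top. prob {\<omega>\<in>space M. \<theta> * (t * a) \<le> \<theta> * Y t \<omega>} \<le> exp (- t * (y + g))"
    using eventually_exp_moment_bounds[OF \<open>0 < g\<close>, of \<theta>]
  proof (rule eventually_mono, elim conjE)
    fix t :: real assume int: "integrable M (\<lambda>\<omega>. exp (\<theta> * Y t \<omega>))"
      and le: "(\<integral>\<omega>. exp (\<theta> * Y t \<omega>) \<partial>M) \<le> exp (t * (\<Lambda> \<theta> + g))"
    have "prob {\<omega>\<in>space M. \<theta> * (t * a) \<le> \<theta> * Y t \<omega>} \<le> exp (- \<theta> * (t * a)) * (\<integral>\<omega>. exp (\<theta> * Y t \<omega>) \<partial>M)"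
      by (rule chernoff_bound[OF measurable_Y int]) auto
    also have "\<dots> \<le> exp (- \<theta> * (t * a)) * exp (t * (\<Lambda> \<theta> + g))"
      using le by simp
    also have "\<dots> = exp (- t * (y + g))"
      by (simp add: g_def exp_add[symmetric] field_simps)
    finally show "prob {\<omega>\<in>space M. \<theta> * (t * a) \<le> \<theta> * Y t \<omega>} \<le> exp (- t * (y + g))" .
  qed
  ultimately show ?thesis by blast
qed

text \<open>The hypothesis \<open>0 \<le> a * (x - a)\<close> says that \<open>x\<close> lies beyond \<open>a\<close>, on the side away from \<open>0\<close>.\<close>

lemma prob_beyond_upper_bound:
  assumes nonneg: "\<And>\<theta>. 0 \<le> \<Lambda> \<theta>" and "ereal y < legendre_transform \<Lambda> a" "a \<noteq> 0"
    and beyond: "\<And>x. x \<in> C \<Longrightarrow> 0 \<le> a * (x - a)"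
  shows "\<exists>g>0. \<forall>\<^sub>F t in at_top. prob {\<omega>\<in>space M. Y t \<omega> / t \<in> C} \<le> exp (- t * (y + g))"
proof -
  obtain \<theta> where \<theta>: "0 \<le> \<theta> * a" "y < \<theta> * a - \<Lambda> \<theta>"
    using legendre_transform_witness[OF nonneg cgf_limit_0 assms(2)] by blast
  obtain g where "g > 0"
    and g: "\<forall>\<^sub>F t in at_top. prob {\<omega>\<in>space M. \<theta> * (t * a) \<le> \<theta> * Y t \<omega>} \<le> exp (- t * (y + g))"
    using prob_half_line_upper_bound[OF \<theta>(2)] by blast
  have tilted: "\<theta> * a \<le> \<theta> * x" if "x \<in> C" for x
  proof -
    have "0 \<le> (\<theta> * a) * (a * (x - a))" using \<theta>(1) beyond[OF that] by simp
    then have "0 \<le> (\<theta> * (x - a)) * a\<^sup>2" by (simp add: power2_eq_square algebra_simps)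
    moreover have "0 < a\<^sup>2" using \<open>a \<noteq> 0\<close> by simp
    ultimately have "0 \<le> \<theta> * (x - a)" by (metis mult_neg_pos not_le)
    then show ?thesis by (simp add: algebra_simps)
  qed
  have "\<forall>\<^sub>F t in at_top. prob {\<omega>\<in>space M. Y t \<omega> / t \<in> C} \<le> exp (- t * (y + g))"
    using eventually_conj[OF g eventually_gt_at_top[of 0]]
  proof (rule eventually_mono, elim conjE)
    fix t :: real assume "0 < t" and g: "prob {\<omega>\<in>space M. \<theta> * (t * a) \<le> \<theta> * Y t \<omega>} \<le> exp (- t * (y + g))"
    have "prob {\<omega>\<in>space M. Y t \<omega> / t \<in> C} \<le> prob {\<omega>\<in>space M. \<theta> * (t * a) \<le> \<theta> * Y t \<omega>}"
    proof (rule finite_measure_mono)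
      show "{\<omega>\<in>space M. Y t \<omega> / t \<in> C} \<subseteq> {\<omega>\<in>space M. \<theta> * (t * a) \<le> \<theta> * Y t \<omega>}"
      proof safe
        fix \<omega> assume "Y t \<omega> / t \<in> C"
        then have "t * (\<theta> * a) \<le> t * (\<theta> * (Y t \<omega> / t))"
          using mult_left_mono[OF tilted[OF \<open>Y t \<omega> / t \<in> C\<close>], of t] \<open>0 < t\<close> by simp
        then show "\<theta> * (t * a) \<le> \<theta> * Y t \<omega>" using \<open>0 < t\<close> by (simp add: algebra_simps)
      qed
    qed measurable
    then show "prob {\<omega>\<in>space M. Y t \<omega> / t \<in> C} \<le> exp (- t * (y + g))" using g by linarith
  qed
  with \<open>g > 0\<close> show ?thesis by blast
qed

lemma prob_closed_one_sided_upper_bound: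
  assumes nonneg: "\<And>\<theta>. 0 \<le> \<Lambda> \<theta>" and "closed C" and y: "ereal y < (INF x\<in>C. legendre_transform \<Lambda> x)"
    and one_sided: "\<And>x x'. x \<in> C \<Longrightarrow> x' \<in> C \<Longrightarrow> 0 < x * x'"
  shows "\<exists>g>0. \<forall>\<^sub>F t in at_top. prob {\<omega>\<in>space M. Y t \<omega> / t \<in> C} \<le> exp (- t * (y + g))"
proof (cases "C = {}")
  case False
  then obtain a where "a \<in> C" and nearest: "\<And>x. x \<in> C \<Longrightarrow> \<bar>a\<bar> \<le> \<bar>x\<bar>"
    using distance_attains_inf[OF \<open>closed C\<close>, of 0] by (auto simp: dist_real_def)
  have "0 \<le> a * (x - a)" if "x \<in> C" for x
  proof -
    have "a * a = \<bar>a\<bar> * \<bar>a\<bar>" by simp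
    also have "\<dots> \<le> \<bar>a\<bar> * \<bar>x\<bar>" using nearest[OF that] by (rule mult_left_mono) simp
    also have "\<dots> = a * x" using one_sided[OF \<open>a \<in> C\<close> that] by (simp add: abs_mult[symmetric])
    finally show ?thesis by (simp add: algebra_simps)
  qed
  moreover have "a \<noteq> 0" using one_sided[OF \<open>a \<in> C\<close> \<open>a \<in> C\<close>] by auto
  moreover have "ereal y < legendre_transform \<Lambda> a"
    using y \<open>a \<in> C\<close> by (meson INF_lower order.strict_trans2)
  ultimately show ?thesis using prob_beyond_upper_bound[OF nonneg] by blast
qed (auto intro: exI[of _ 1])

text \<open>Nonnegativity of \<open>\<Lambda>\<close> makes \<open>0\<close> a minimiser of the rate, so that a closed set missing \<open>0\<close>
  splits into two one-sided pieces.\<close>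

lemma prob_closed_upper_bound:
  assumes nonneg: "\<And>\<theta>. 0 \<le> \<Lambda> \<theta>" and "closed C" and y: "ereal y < (INF x\<in>C. legendre_transform \<Lambda> x)"
  shows "\<forall>\<^sub>F t in at_top. prob {\<omega>\<in>space M. Y t \<omega> / t \<in> C} \<le> exp (- t * y)"
proof (cases "0 \<in> C")
  case True
  then have "ereal y < 0"
    using y legendre_transform_at_0[of \<Lambda>, OF nonneg cgf_limit_0] by (metis INF_lower order.strict_trans2)
  then have exp_ge_1: "1 \<le> exp (- t * y)" if "0 < t" for t
    using that by (simp add: mult_pos_neg less_imp_le)
  show ?thesis
    using eventually_gt_at_top[of 0] by eventually_elim (rule order.trans[OF prob_le_1 exp_ge_1])
next
  case False
  define C_pos where "C_pos = C \<inter> {0..}"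
  define C_neg where "C_neg = C \<inter> {..0}"
  have "closed C_pos" "closed C_neg"
    using \<open>closed C\<close> by (auto simp: C_pos_def C_neg_def)
  have pos: "0 < x" if "x \<in> C" "0 \<le> x" for x
    using that False by (cases "x = 0") auto
  have neg: "x < 0" if "x \<in> C" "x \<le> 0" for x
    using that False by (cases "x = 0") auto
  have "\<exists>g>0. \<forall>\<^sub>F t in at_top. prob {\<omega>\<in>space M. Y t \<omega> / t \<in> C_pos} \<le> exp (- t * (y + g))"
    by (rule prob_closed_one_sided_upper_bound[OF nonneg \<open>closed C_pos\<close> order.strict_trans2[OF y INF_superset_mono]])
      (auto simp: C_pos_def intro: mult_pos_pos pos)
  then obtain g_pos where "0 < g_pos"
    and g_pos: "\<forall>\<^sub>F t in at_top. prob {\<omega>\<in>space M. Y t \<omega> / t \<in> C_pos} \<le> exp (- t * (y + g_pos))"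
    by blast
  have "\<exists>g>0. \<forall>\<^sub>F t in at_top. prob {\<omega>\<in>space M. Y t \<omega> / t \<in> C_neg} \<le> exp (- t * (y + g))"
    by (rule prob_closed_one_sided_upper_bound[OF nonneg \<open>closed C_neg\<close> order.strict_trans2[OF y INF_superset_mono]])
      (auto simp: C_neg_def intro: mult_neg_neg neg)
  then obtain g_neg where "0 < g_neg"
    and g_neg: "\<forall>\<^sub>F t in at_top. prob {\<omega>\<in>space M. Y t \<omega> / t \<in> C_neg} \<le> exp (- t * (y + g_neg))"
    by blast
  have [measurable]: "C_pos \<in> sets borel" "C_neg \<in> sets borel"
    using \<open>closed C_pos\<close> \<open>closed C_neg\<close> by auto
  have union: "prob {\<omega>\<in>space M. Y t \<omega> / t \<in> C}
      \<le> prob {\<omega>\<in>space M. Y t \<omega> / t \<in> C_pos} + prob {\<omega>\<in>space M. Y t \<omega> / t \<in> C_neg}" for t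
  proof -
    have "{\<omega>\<in>space M. Y t \<omega> / t \<in> C} = {\<omega>\<in>space M. Y t \<omega> / t \<in> C_pos} \<union> {\<omega>\<in>space M. Y t \<omega> / t \<in> C_neg}"
      by (auto simp: C_pos_def C_neg_def)
    then show ?thesis by (simp add: measure_Un_le)
  qed
  show ?thesis
    using eventually_add_exp_le[OF \<open>0 < g_pos\<close> \<open>0 < g_neg\<close> g_pos g_neg]
    by (rule eventually_mono) (rule order.trans[OF union])
qed

text \<open>If \<open>\<Lambda>' \<theta> = x\<close>, the moments tilted to \<open>\<theta> \<plusminus> \<eta>\<close> are exponentially smaller than the one at
  \<open>\<theta>\<close> on the tails beyond \<open>x \<plusminus> \<delta>\<close>, so the event \<open>\<bar>Y t / t - x\<bar> < \<delta>\<close> carries at least half of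
  \<open>E exp (\<theta> Y t)\<close>.\<close>

lemma prob_near_lower_bound:
  assumes deriv: "(\<Lambda> has_real_derivative x) (at \<theta>)" and y: "\<theta> * x - \<Lambda> \<theta> < y" and "0 < \<delta>\<^sub>0"
  shows "\<forall>\<^sub>F t in at_top. exp (- t * y) \<le> prob {\<omega>\<in>space M. \<bar>Y t \<omega> / t - x\<bar> < \<delta>\<^sub>0}"
proof -
  define gap where "gap = y - (\<theta> * x - \<Lambda> \<theta>)"
  have "0 < gap" using y by (simp add: gap_def)
  define \<delta> where "\<delta> = min \<delta>\<^sub>0 (gap / (4 * (\<bar>\<theta>\<bar> + 1)))"
  have "0 < \<delta>" using \<open>0 < gap\<close> \<open>0 < \<delta>\<^sub>0\<close> by (simp add: \<delta>_def)
  have "\<bar>\<theta>\<bar> * \<delta> \<le> (\<bar>\<theta>\<bar> + 1) * (gap / (4 * (\<bar>\<theta>\<bar> + 1)))"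
    using \<open>0 < \<delta>\<close> by (intro mult_mono) (auto simp: \<delta>_def)
  also have "\<dots> = gap / 4"
    by (simp add: field_simps add_pos_nonneg)
  finally have \<delta>_small: "\<bar>\<theta>\<bar> * \<delta> \<le> gap / 4" .
  have "0 < \<delta> / 2" using \<open>0 < \<delta>\<close> by simp
  then obtain \<eta> where "0 < \<eta>"
    and secant: "\<And>h. h \<in> {\<eta>, - \<eta>} \<Longrightarrow> \<Lambda> (\<theta> + h) - \<Lambda> \<theta> < h * x + \<bar>h\<bar> * (\<delta> / 2)"
    using DERIV_secant_bound[OF deriv] by blast
  define \<kappa> where "\<kappa> = \<eta> * \<delta> / 2"
  have "0 < \<kappa>" using \<open>0 < \<eta>\<close> \<open>0 < \<delta>\<close> by (simp add: \<kappa>_def)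
  have \<kappa>: "\<kappa> \<le> h * x + \<bar>h\<bar> * \<delta> - (\<Lambda> (\<theta> + h) - \<Lambda> \<theta>)" if "h \<in> {\<eta>, - \<eta>}" for h
    using secant[OF that] that \<open>0 < \<eta>\<close> by (auto simp: \<kappa>_def algebra_simps)
  define \<epsilon> where "\<epsilon> = min (\<kappa> / 3) (gap / 4)"
  have "0 < \<epsilon>" "\<epsilon> \<le> \<kappa> / 3" "\<epsilon> \<le> gap / 4"
    using \<open>0 < \<kappa>\<close> \<open>0 < gap\<close> by (simp_all add: \<epsilon>_def)
  define m where "m t h = (\<integral>\<omega>. exp ((\<theta> + h) * Y t \<omega>) \<partial>M)" for t h
  have bounds: "\<forall>\<^sub>F t in at_top. 0 < t \<and> integrable M (\<lambda>\<omega>. exp ((\<theta> + h) * Y t \<omega>))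
    \<and> exp (t * (\<Lambda> (\<theta> + h) - \<epsilon>)) \<le> m t h \<and> m t h \<le> exp (t * (\<Lambda> (\<theta> + h) + \<epsilon>))" for h
    unfolding m_def by (rule eventually_exp_moment_bounds[OF \<open>0 < \<epsilon>\<close>])
  show ?thesis
    using bounds[of 0] bounds[of \<eta>] bounds[of "- \<eta>"]
      eventually_ge_at_top[of "4 / (\<kappa> / 3)"] eventually_ge_at_top[of "2 / (gap / 4)"]
  proof eventually_elim
    case (elim t)
    then have "0 < t" by simp
    have "0 < m t 0" using elim(1) by (meson exp_gt_zero less_le_trans)
    have tail: "exp (- t * (h * x + \<bar>h\<bar> * \<delta>)) * m t h \<le> m t 0 / 4"
      if "h \<in> {\<eta>, - \<eta>}" and upper: "m t h \<le> exp (t * (\<Lambda> (\<theta> + h) + \<epsilon>))" for h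
    proof -
      have "- (h * x + \<bar>h\<bar> * \<delta>) + (\<Lambda> (\<theta> + h) + \<epsilon>) \<le> (\<Lambda> \<theta> - \<epsilon>) - \<kappa> / 3"
        using \<kappa>[OF that(1)] \<open>\<epsilon> \<le> \<kappa> / 3\<close> by linarith
      then have "t * (- (h * x + \<bar>h\<bar> * \<delta>) + (\<Lambda> (\<theta> + h) + \<epsilon>)) \<le> t * ((\<Lambda> \<theta> - \<epsilon>) - \<kappa> / 3)"
        using \<open>0 < t\<close> by (intro mult_left_mono) auto
      then have exponent: "exp (- t * (h * x + \<bar>h\<bar> * \<delta>)) * exp (t * (\<Lambda> (\<theta> + h) + \<epsilon>))
          \<le> exp (t * (\<Lambda> \<theta> - \<epsilon>)) * exp (- t * (\<kappa> / 3))"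
        by (simp add: exp_add[symmetric] algebra_simps)
      have "exp (- t * (h * x + \<bar>h\<bar> * \<delta>)) * m t h
          \<le> exp (- t * (h * x + \<bar>h\<bar> * \<delta>)) * exp (t * (\<Lambda> (\<theta> + h) + \<epsilon>))"
        using upper by (rule mult_left_mono) simp
      also note exponent
      also have "exp (t * (\<Lambda> \<theta> - \<epsilon>)) * exp (- t * (\<kappa> / 3)) \<le> m t 0 * (1 / 4)"
        using elim(1) exp_neg_le_inverse[of "\<kappa> / 3" 4 t] elim(4) \<open>0 < \<kappa>\<close> \<open>0 < m t 0\<close>
        by (intro mult_mono) auto
      finally show ?thesis by simp
    qed
    have "m t 0 \<le> prob {\<omega>\<in>space M. \<bar>Y t \<omega> / t - x\<bar> < \<delta>} * exp (t * (\<theta> * x + \<bar>\<theta>\<bar> * \<delta>))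
        + exp (- t * (\<eta> * x + \<eta> * \<delta>)) * m t \<eta> + exp (- t * (- \<eta> * x + \<eta> * \<delta>)) * m t (- \<eta>)"
      using exp_moment_le_local_plus_tails[of "Y t" t \<eta> \<theta> x \<delta>] elim \<open>0 < \<eta>\<close> by (simp add: m_def)
    also have "\<dots> \<le> prob {\<omega>\<in>space M. \<bar>Y t \<omega> / t - x\<bar> < \<delta>} * exp (t * (\<theta> * x + \<bar>\<theta>\<bar> * \<delta>))
        + m t 0 / 4 + m t 0 / 4"
      using tail[of \<eta>] tail[of "- \<eta>"] elim \<open>0 < \<eta>\<close> by (intro add_mono order.refl) auto
    finally have "m t 0 / 2 \<le> prob {\<omega>\<in>space M. \<bar>Y t \<omega> / t - x\<bar> < \<delta>} * exp (t * (\<theta> * x + \<bar>\<theta>\<bar> * \<delta>))"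
      by simp
    moreover have "exp (- t * y) * exp (t * (\<theta> * x + \<bar>\<theta>\<bar> * \<delta>)) \<le> m t 0 / 2"
    proof -
      have "- y + (\<theta> * x + \<bar>\<theta>\<bar> * \<delta>) = \<Lambda> \<theta> - gap + \<bar>\<theta>\<bar> * \<delta>"
        by (simp add: gap_def)
      also have "\<dots> \<le> (\<Lambda> \<theta> - \<epsilon>) - gap / 4"
        using \<delta>_small \<open>\<epsilon> \<le> gap / 4\<close> \<open>0 < gap\<close> by linarith
      finally have "t * (- y + (\<theta> * x + \<bar>\<theta>\<bar> * \<delta>)) \<le> t * ((\<Lambda> \<theta> - \<epsilon>) - gap / 4)"
        using \<open>0 < t\<close> by (intro mult_left_mono) auto
      then have "exp (- t * y) * exp (t * (\<theta> * x + \<bar>\<theta>\<bar> * \<delta>)) \<le> exp (t * (\<Lambda> \<theta> - \<epsilon>)) * exp (- t * (gap / 4))"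
        by (simp add: exp_add[symmetric] algebra_simps)
      also have "\<dots> \<le> m t 0 * (1 / 2)"
        using elim(1) exp_neg_le_inverse[of "gap / 4" 2 t] elim(5) \<open>0 < gap\<close> \<open>0 < m t 0\<close>
        by (intro mult_mono) auto
      finally show ?thesis by simp
    qed
    moreover have "prob {\<omega>\<in>space M. \<bar>Y t \<omega> / t - x\<bar> < \<delta>} \<le> prob {\<omega>\<in>space M. \<bar>Y t \<omega> / t - x\<bar> < \<delta>\<^sub>0}"
      by (intro finite_measure_mono) (auto simp: \<delta>_def)
    ultimately show ?case by (smt (verit) exp_gt_zero mult_le_cancel_right_pos)
  qed
qed

theorem gartner_ellis:
  assumes nonneg: "\<And>\<theta>. 0 \<le> \<Lambda> \<theta>" and deriv_surj: "\<And>x. \<exists>\<theta>. (\<Lambda> has_real_derivative x) (at \<theta>)"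
  shows "LDP M (\<lambda>t \<omega>. Y t \<omega> / t) (\<lambda>t. t) (legendre_transform \<Lambda>)"
  unfolding LDP_def
proof (intro conjI allI impI)
  show "0 \<le> legendre_transform \<Lambda> x" for x
    using legendre_transform_nonneg cgf_limit_0 by blast
  show "closed {x. legendre_transform \<Lambda> x \<le> \<beta>}" for \<beta>
    by (rule closed_legendre_transform_sublevel)
  show "Limsup at_top (\<lambda>t. ereal (1 / t) * elog (prob {\<omega>\<in>space M. Y t \<omega> / t \<in> C}))
      \<le> - (INF x\<in>C. legendre_transform \<Lambda> x)" if "closed C" for C
    using prob_closed_upper_bound[OF nonneg that] by (rule Limsup_elog_le)
  show "- (INF x\<in>U. legendre_transform \<Lambda> x)
      \<le> Liminf at_top (\<lambda>t. ereal (1 / t) * elog (prob {\<omega>\<in>space M. Y t \<omega> / t \<in> U}))"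
    if "open U" for U
  proof -
    have [measurable]: "U \<in> sets borel" using \<open>open U\<close> by (rule borel_open)
    have "- legendre_transform \<Lambda> x \<le> Liminf at_top (\<lambda>t. ereal (1 / t) * elog (prob {\<omega>\<in>space M. Y t \<omega> / t \<in> U}))"
      if "x \<in> U" for x
    proof (rule Liminf_elog_ge)
      fix y assume "legendre_transform \<Lambda> x < ereal y"
      obtain \<theta> where deriv: "(\<Lambda> has_real_derivative x) (at \<theta>)" using deriv_surj by blast
      have "\<theta> * x - \<Lambda> \<theta> < y"
        using order.strict_trans1[OF legendre_transform_ge \<open>legendre_transform \<Lambda> x < ereal y\<close>] by simp
      moreover obtain d where "d > 0" "ball x d \<subseteq> U"
        using \<open>open U\<close> \<open>x \<in> U\<close> open_contains_ball by blast
      ultimately have "\<forall>\<^sub>F t in at_top. exp (- t * y) \<le> prob {\<omega>\<in>space M. \<bar>Y t \<omega> / t - x\<bar> < d}"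
        using prob_near_lower_bound[OF deriv] by blast
      then show "\<forall>\<^sub>F t in at_top. exp (- t * y) \<le> prob {\<omega>\<in>space M. Y t \<omega> / t \<in> U}"
      proof (rule eventually_mono)
        fix t assume "exp (- t * y) \<le> prob {\<omega>\<in>space M. \<bar>Y t \<omega> / t - x\<bar> < d}"
        moreover have "prob {\<omega>\<in>space M. \<bar>Y t \<omega> / t - x\<bar> < d} \<le> prob {\<omega>\<in>space M. Y t \<omega> / t \<in> U}"
          using \<open>ball x d \<subseteq> U\<close>
          by (intro finite_measure_mono) (auto simp: dist_real_def subset_eq abs_minus_commute)
        ultimately show "exp (- t * y) \<le> prob {\<omega>\<in>space M. Y t \<omega> / t \<in> U}" by linarith
      qed
    qed
    then have "(SUP x\<in>U. - legendre_transform \<Lambda> x)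
        \<le> Liminf at_top (\<lambda>t. ereal (1 / t) * elog (prob {\<omega>\<in>space M. Y t \<omega> / t \<in> U}))"
      by (rule SUP_least)
    then show ?thesis by (simp add: ereal_SUP_uminus_eq)
  qed
qed

end

section \<open>Exponential growth rates\<close>

definition has_exp_rate :: "(real \<Rightarrow> ennreal) \<Rightarrow> real \<Rightarrow> bool" where
  "has_exp_rate A \<rho> \<longleftrightarrow>
     (\<forall>\<epsilon>>0. \<forall>\<^sub>F t in at_top. ennreal (exp (t * (\<rho> - \<epsilon>))) \<le> A t \<and> A t \<le> ennreal (exp (t * (\<rho> + \<epsilon>))))"

lemma has_exp_rateI:
  assumes "\<And>\<epsilon>. 0 < \<epsilon> \<Longrightarrow> \<forall>\<^sub>F t in at_top. ennreal (exp (t * (\<rho> - \<epsilon>))) \<le> A t"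
    and "\<And>\<epsilon>. 0 < \<epsilon> \<Longrightarrow> \<forall>\<^sub>F t in at_top. A t \<le> ennreal (exp (t * (\<rho> + \<epsilon>)))"
  shows "has_exp_rate A \<rho>"
  unfolding has_exp_rate_def using assms by (auto intro: eventually_conj)

lemma has_exp_rateD:
  assumes "has_exp_rate A \<rho>" "0 < \<epsilon>"
  shows "\<forall>\<^sub>F t in at_top. ennreal (exp (t * (\<rho> - \<epsilon>))) \<le> A t \<and> A t \<le> ennreal (exp (t * (\<rho> + \<epsilon>)))"
  using assms unfolding has_exp_rate_def by blast

lemma has_exp_rate_squeeze:
  assumes "has_exp_rate A \<rho>" "has_exp_rate B \<rho>" "\<And>t. A t \<le> F t" "\<And>t. F t \<le> B t"
  shows "has_exp_rate F \<rho>"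
proof (rule has_exp_rateI)
  fix \<epsilon> :: real assume "0 < \<epsilon>"
  show "\<forall>\<^sub>F t in at_top. ennreal (exp (t * (\<rho> - \<epsilon>))) \<le> F t"
    using has_exp_rateD[OF assms(1) \<open>0 < \<epsilon>\<close>] by (rule eventually_mono) (metis assms(3) order.trans)
  show "\<forall>\<^sub>F t in at_top. F t \<le> ennreal (exp (t * (\<rho> + \<epsilon>)))"
    using has_exp_rateD[OF assms(2) \<open>0 < \<epsilon>\<close>] by (rule eventually_mono) (metis assms(4) order.trans)
qed

lemma has_exp_rate_mult:
  assumes A: "has_exp_rate A \<rho>\<^sub>1" and B: "has_exp_rate B \<rho>\<^sub>2"
  shows "has_exp_rate (\<lambda>t. A t * B t) (\<rho>\<^sub>1 + \<rho>\<^sub>2)"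
proof (rule has_exp_rateI)
  fix \<epsilon> :: real assume "0 < \<epsilon>"
  then have "0 < \<epsilon> / 2" by simp
  have lo: "ennreal (exp (t * (\<rho>\<^sub>1 + \<rho>\<^sub>2 - \<epsilon>)))
      = ennreal (exp (t * (\<rho>\<^sub>1 - \<epsilon> / 2))) * ennreal (exp (t * (\<rho>\<^sub>2 - \<epsilon> / 2)))"
    and hi: "ennreal (exp (t * (\<rho>\<^sub>1 + \<rho>\<^sub>2 + \<epsilon>)))
      = ennreal (exp (t * (\<rho>\<^sub>1 + \<epsilon> / 2))) * ennreal (exp (t * (\<rho>\<^sub>2 + \<epsilon> / 2)))" for t
    by (simp_all add: ennreal_mult''[symmetric] exp_add[symmetric] algebra_simps)
  note ev = has_exp_rateD[OF A \<open>0 < \<epsilon> / 2\<close>] has_exp_rateD[OF B \<open>0 < \<epsilon> / 2\<close>]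
  show "\<forall>\<^sub>F t in at_top. ennreal (exp (t * (\<rho>\<^sub>1 + \<rho>\<^sub>2 - \<epsilon>))) \<le> A t * B t"
    using ev
  proof eventually_elim
    case (elim t)
    then show ?case unfolding lo by (auto intro!: mult_mono)
  qed
  show "\<forall>\<^sub>F t in at_top. A t * B t \<le> ennreal (exp (t * (\<rho>\<^sub>1 + \<rho>\<^sub>2 + \<epsilon>)))"
    using ev
  proof eventually_elim
    case (elim t)
    then show ?case unfolding hi by (auto intro!: mult_mono)
  qed
qed

lemma has_exp_rate_bounded_factor:
  assumes A: "has_exp_rate A \<rho>"
    and B: "\<And>t. ennreal (exp (- K)) * A t \<le> B t" "\<And>t. B t \<le> ennreal (exp K) * A t"
  shows "has_exp_rate B \<rho>"
proof -
  have const: "has_exp_rate (\<lambda>_. ennreal (exp c)) 0" for c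
  proof (rule has_exp_rateI)
    fix \<epsilon> :: real assume "0 < \<epsilon>"
    show "\<forall>\<^sub>F t in at_top. ennreal (exp (t * (0 - \<epsilon>))) \<le> ennreal (exp c)"
      using eventually_ge_at_top[of "- c / \<epsilon>"]
    proof (rule eventually_mono)
      fix t assume "- c / \<epsilon> \<le> t"
      then have "- c \<le> t * \<epsilon>" using \<open>0 < \<epsilon>\<close> by (simp add: field_simps)
      then show "ennreal (exp (t * (0 - \<epsilon>))) \<le> ennreal (exp c)" by (intro ennreal_leI) simp
    qed
    show "\<forall>\<^sub>F t in at_top. ennreal (exp c) \<le> ennreal (exp (t * (0 + \<epsilon>)))"
      using eventually_ge_at_top[of "c / \<epsilon>"]
    proof (rule eventually_mono)
      fix t assume "c / \<epsilon> \<le> t"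
      then have "c \<le> t * \<epsilon>" using \<open>0 < \<epsilon>\<close> by (simp add: pos_divide_le_eq)
      then show "ennreal (exp c) \<le> ennreal (exp (t * (0 + \<epsilon>)))" by (intro ennreal_leI) simp
    qed
  qed
  have "has_exp_rate (\<lambda>t. ennreal (exp (- K)) * A t) \<rho>" "has_exp_rate (\<lambda>t. ennreal (exp K) * A t) \<rho>"
    using has_exp_rate_mult[OF const A] by simp_all
  then show ?thesis by (rule has_exp_rate_squeeze) (use B in auto)
qed

lemma has_exp_rate_ln_tendsto:
  assumes A: "has_exp_rate A \<rho>"
  shows "((\<lambda>t. ln (enn2real (A t)) / t) \<longlongrightarrow> \<rho>) at_top"
proof (rule tendstoI)
  fix \<epsilon> :: real assume "0 < \<epsilon>"
  then have "0 < \<epsilon> / 2" by simp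
  show "\<forall>\<^sub>F t in at_top. dist (ln (enn2real (A t)) / t) \<rho> < \<epsilon>"
    using has_exp_rateD[OF A \<open>0 < \<epsilon> / 2\<close>] eventually_gt_at_top[of 0]
  proof eventually_elim
    case (elim t)
    then have "A t \<noteq> \<top>" by (auto simp: top_unique)
    with elim have "exp (t * (\<rho> - \<epsilon> / 2)) \<le> enn2real (A t)" "enn2real (A t) \<le> exp (t * (\<rho> + \<epsilon> / 2))"
      by (metis enn2real_ennreal enn2real_mono exp_ge_zero less_top ennreal_neq_top)+
    then have "t * (\<rho> - \<epsilon> / 2) \<le> ln (enn2real (A t))" "ln (enn2real (A t)) \<le> t * (\<rho> + \<epsilon> / 2)"
      by (metis exp_gt_zero ln_exp ln_mono less_le_trans)+
    then have "\<rho> - \<epsilon> / 2 \<le> ln (enn2real (A t)) / t" "ln (enn2real (A t)) / t \<le> \<rho> + \<epsilon> / 2"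
      using \<open>0 < t\<close> by (simp_all add: le_divide_eq divide_le_eq mult.commute)
    then show ?case using \<open>0 < \<epsilon>\<close> by (simp add: dist_real_def abs_if)
  qed
qed

lemma has_exp_rate_eventually_finite:
  "has_exp_rate A \<rho> \<Longrightarrow> \<forall>\<^sub>F t in at_top. A t < \<top>"
  using has_exp_rateD[of A \<rho> 1] by (auto elim!: eventually_mono simp: less_top[symmetric] top_unique)

section \<open>Inverse stable subordinators\<close>

definition first_passage :: "(real \<Rightarrow> real) \<Rightarrow> real \<Rightarrow> real" where
  "first_passage f t = Inf {s. 0 \<le> s \<and> t < f s}"

lemma inverse_subordinator_eq_first_passage:
  "inverse_subordinator D t \<omega> = first_passage (\<lambda>s. D s \<omega>) t"
  by (simp add: inverse_subordinator_def first_passage_def)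

lemma bdd_below_passage_set: "bdd_below {s. 0 \<le> s \<and> t < f s}"
  by (rule bdd_belowI[of _ 0]) auto

lemma first_passage_nonneg: "{s. 0 \<le> s \<and> t < f s} \<noteq> {} \<Longrightarrow> 0 \<le> first_passage f t"
  unfolding first_passage_def by (rule cInf_greatest) auto

lemma first_passage_le: "0 \<le> s \<Longrightarrow> t < f s \<Longrightarrow> first_passage f t \<le> s"
  unfolding first_passage_def by (rule cInf_lower[OF _ bdd_below_passage_set]) auto

lemma first_passage_ge:
  assumes "mono_on {0..} f" "0 \<le> s" "f s \<le> t" "{s. 0 \<le> s \<and> t < f s} \<noteq> {}"
  shows "s \<le> first_passage f t"
  unfolding first_passage_def
proof (rule cInf_greatest[OF assms(4)])
  fix r assume "r \<in> {s. 0 \<le> s \<and> t < f s}"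
  then show "s \<le> r" using mono_onD[OF assms(1), of r s] assms(2,3) by (cases "s \<le> r") auto
qed

text \<open>A countable description of \<open>first_passage f t \<le> s\<close>; it is what makes the first passage time
  and its integer ceiling measurable functions of the path.\<close>

lemma first_passage_le_iff:
  assumes mono: "mono_on {0..} f" and ne: "{s. 0 \<le> s \<and> t < f s} \<noteq> {}"
  shows "first_passage f t \<le> s \<longleftrightarrow>
    (\<forall>n. 0 \<le> s + inverse (real (Suc n)) \<and> t < f (s + inverse (real (Suc n))))"
proof
  assume le: "first_passage f t \<le> s"
  show "\<forall>n. 0 \<le> s + inverse (real (Suc n)) \<and> t < f (s + inverse (real (Suc n)))"
  proof
    fix n
    have "0 < inverse (real (Suc n))" by simp
    then have "first_passage f t < s + inverse (real (Suc n))"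
      using le by linarith
    then obtain r where "0 \<le> r" "t < f r" "r < s + inverse (real (Suc n))"
      using cInf_less_iff[OF ne bdd_below_passage_set] by (auto simp: first_passage_def)
    then show "0 \<le> s + inverse (real (Suc n)) \<and> t < f (s + inverse (real (Suc n)))"
      using mono_onD[OF mono, of r "s + inverse (real (Suc n))"] by auto
  qed
next
  assume "\<forall>n. 0 \<le> s + inverse (real (Suc n)) \<and> t < f (s + inverse (real (Suc n)))"
  then have "\<And>n. first_passage f t \<le> s + inverse (real (Suc n))"
    by (auto intro: first_passage_le)
  then show "first_passage f t \<le> s"
    using LIMSEQ_inverse_real_of_nat_add[of s] by (intro LIMSEQ_le_const) auto
qed

text \<open>For monotone \<open>f\<close> this is the least integer \<open>k \<ge> first_passage f t\<close>, written so that it is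
  visibly measurable in \<open>f\<close>.\<close>

definition passage_ceiling :: "(real \<Rightarrow> real) \<Rightarrow> real \<Rightarrow> nat" where
  "passage_ceiling f t = (LEAST k. \<forall>n. t < f (real k + inverse (real (Suc n))))"

lemma passage_ceiling_restrict: "passage_ceiling (restrict f {0..}) t = passage_ceiling f t"
  unfolding passage_ceiling_def by (simp add: add_nonneg_nonneg)

lemma passage_ceiling_bounds:
  assumes "mono_on {0..} f" and "{s. 0 \<le> s \<and> t < f s} \<noteq> {}"
  shows "first_passage f t \<le> real (passage_ceiling f t)"
    and "real (passage_ceiling f t - 1) \<le> first_passage f t"
proof -
  define L where "L = first_passage f t"
  have K: "passage_ceiling f t = (LEAST k. L \<le> real k)"
    unfolding passage_ceiling_def L_def by (subst first_passage_le_iff[OF assms]) simp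
  obtain k where "L \<le> real k" using real_arch_simple by blast
  then show "L \<le> real (passage_ceiling f t)" unfolding K by (rule LeastI)
  show "real (passage_ceiling f t - 1) \<le> L"
  proof (cases "passage_ceiling f t")
    case (Suc j)
    then have "\<not> L \<le> real j" unfolding K by (metis lessI not_less_Least)
    then show ?thesis using Suc by simp
  qed (use first_passage_nonneg[OF assms(2)] L_def in simp)
qed

text \<open>With \<open>K = L_ceiling t\<close> below, the integer times \<open>grid_point False K = K - 1\<close> and
  \<open>grid_point True K = K\<close> bracket \<open>L t\<close>.\<close>

definition grid_point :: "bool \<Rightarrow> nat \<Rightarrow> nat" where
  "grid_point up k = (if up then k else k - 1)"

lemma powr_diff_bounds:
  fixes x y \<nu> :: real
  assumes "0 < x" "x < y" "0 < \<nu>" "\<nu> < 1"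
  shows "\<nu> * y powr (\<nu> - 1) * (y - x) < y powr \<nu> - x powr \<nu>"
    and "y powr \<nu> - x powr \<nu> < \<nu> * x powr (\<nu> - 1) * (y - x)"
proof -
  have "continuous_on {x..y} (\<lambda>z. z powr \<nu>)"
    using assms by (intro continuous_intros) auto
  moreover have "(\<lambda>z. z powr \<nu>) differentiable at z" if "x < z" for z
    using has_real_derivative_powr[of z \<nu>] that assms real_differentiable_def by force
  ultimately obtain l z where z: "x < z" "z < y" "((\<lambda>z. z powr \<nu>) has_real_derivative l) (at z)"
    and mvt: "y powr \<nu> - x powr \<nu> = (y - x) * l"
    using MVT[OF assms(2)] by blast
  have "l = \<nu> * z powr (\<nu> - 1)"
    using DERIV_unique[OF z(3) has_real_derivative_powr[of z \<nu>]] z assms by auto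
  moreover have "y powr (\<nu> - 1) < z powr (\<nu> - 1)" "z powr (\<nu> - 1) < x powr (\<nu> - 1)"
    using assms z by (auto intro: powr_less_mono2_neg)
  ultimately show "\<nu> * y powr (\<nu> - 1) * (y - x) < y powr \<nu> - x powr \<nu>"
    and "y powr \<nu> - x powr \<nu> < \<nu> * x powr (\<nu> - 1) * (y - x)"
    using mvt assms by (simp_all add: mult.commute mult.left_commute)
qed

text \<open>Exponents for the lower bound on \<open>E exp (c L t)\<close> with \<open>\<rho> = c powr (1 / \<nu>)\<close>: at time
  \<open>s = a t\<close>, tilting \<open>D s\<close> by \<open>u\<close> slightly above \<open>\<rho>\<close> makes \<open>D s\<close> concentrate in
  \<open>((1 - \<delta>) t, t]\<close>; the two tails are controlled by tilting with \<open>\<rho>\<close> and \<open>w\<close>.\<close>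

lemma stable_tilt_exponents:
  fixes \<rho> \<nu> \<delta> :: real
  assumes "0 < \<rho>" "0 < \<nu>" "\<nu> < 1" "0 < \<delta>" "\<delta> \<le> 1/2"
    and a: "a = \<rho> powr (1 - \<nu>) / \<nu>" and u: "u = \<rho> * (1 + \<delta> / 4)" and w: "w = \<rho> * (1 + \<delta> / 2)"
  shows "0 < a * \<rho> powr \<nu> + (u - \<rho>) - a * u powr \<nu>"
    and "0 < a * w powr \<nu> - a * u powr \<nu> - (w - u) * (1 - \<delta>)"
proof -
  have "0 < a" "\<rho> < u" "u < w" using assms by auto
  have "a * (\<nu> * \<rho> powr (\<nu> - 1)) = 1"
    using assms by (simp add: powr_add[symmetric])
  then have eq: "a * (\<nu> * \<rho> powr (\<nu> - 1) * (u - \<rho>)) = u - \<rho>"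
    by (simp add: mult.assoc[symmetric])
  have "a * (u powr \<nu> - \<rho> powr \<nu>) < a * (\<nu> * \<rho> powr (\<nu> - 1) * (u - \<rho>))"
    using powr_diff_bounds(2)[of \<rho> u \<nu>] \<open>0 < a\<close> \<open>\<rho> < u\<close> assms(1-3) by (intro mult_strict_left_mono) auto
  then have "a * (u powr \<nu> - \<rho> powr \<nu>) < u - \<rho>" unfolding eq .
  then show "0 < a * \<rho> powr \<nu> + (u - \<rho>) - a * u powr \<nu>"
    by (simp add: algebra_simps)
  have "1 - \<delta> \<le> 1 / (1 + \<delta> / 2)"
    using assms by (simp add: field_simps)
  also have "\<dots> = (\<rho> / w) powr 1" using assms by (simp add: w)
  also have "\<dots> \<le> (\<rho> / w) powr (1 - \<nu>)"
    using assms(1,2) \<open>\<rho> < u\<close> \<open>u < w\<close> by (intro powr_mono') (auto simp: divide_le_eq_1)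
  also have "\<dots> = \<rho> powr (1 - \<nu>) / w powr (1 - \<nu>)"
    by (rule powr_divide)
  also have "\<dots> = a * \<nu> * w powr (\<nu> - 1)"
    using powr_minus[of w "1 - \<nu>"] \<open>0 < \<nu>\<close> by (simp add: a divide_inverse)
  finally have "(w - u) * (1 - \<delta>) \<le> (w - u) * (a * \<nu> * w powr (\<nu> - 1))"
    using \<open>u < w\<close> by (intro mult_left_mono) auto
  also have "\<dots> = a * (\<nu> * w powr (\<nu> - 1) * (w - u))"
    by (simp only: mult_ac)
  also have "\<dots> < a * (w powr \<nu> - u powr \<nu>)"
    using powr_diff_bounds(1)[of u w \<nu>] \<open>0 < a\<close> \<open>\<rho> < u\<close> \<open>u < w\<close> assms(1-3)
    by (intro mult_strict_left_mono) auto
  finally show "0 < a * w powr \<nu> - a * u powr \<nu> - (w - u) * (1 - \<delta>)"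
    by (simp add: algebra_simps)
qed

locale inverse_stable_subordinator =
  fixes M :: "'a measure" and \<nu> :: real and D :: "real \<Rightarrow> 'a \<Rightarrow> real"
  assumes stable_subordinator: "stable_subordinator M \<nu> D" and \<nu>: "0 < \<nu>" "\<nu> < 1"
begin

sublocale prob_space M
  using stable_subordinator by (simp add: stable_subordinator_def)

lemma measurable_D [measurable]: "D s \<in> borel_measurable M"
  using stable_subordinator by (simp add: stable_subordinator_def)

lemma mono_D: "\<omega> \<in> space M \<Longrightarrow> mono_on {0..} (\<lambda>s. D s \<omega>)"
  using stable_subordinator by (simp add: stable_subordinator_def)

lemma D_nonneg: "\<omega> \<in> space M \<Longrightarrow> 0 \<le> s \<Longrightarrow> 0 \<le> D s \<omega>"
  using mono_onD[OF mono_D, of \<omega> 0 s] stable_subordinator by (simp add: stable_subordinator_def)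

lemma laplace_D: "0 \<le> s \<Longrightarrow> 0 \<le> u \<Longrightarrow> (\<integral>\<omega>. exp (- u * D s \<omega>) \<partial>M) = exp (- s * u powr \<nu>)"
  using stable_subordinator by (simp add: stable_subordinator_def)

lemma integrable_exp_D: "0 \<le> s \<Longrightarrow> 0 \<le> u \<Longrightarrow> integrable M (\<lambda>\<omega>. exp (- u * D s \<omega>))"
  by (rule Bochner_Integration.integrable_bound[of _ "\<lambda>_. 1::real"]) (auto intro!: AE_I2 simp: D_nonneg)

lemma prob_D_le:
  assumes "0 \<le> s" "0 \<le> u"
  shows "prob {\<omega>\<in>space M. D s \<omega> \<le> T} \<le> exp (u * T) * exp (- s * u powr \<nu>)"
proof -
  have "prob {\<omega>\<in>space M. D s \<omega> \<le> T} \<le> exp (- (- u) * T) * (\<integral>\<omega>. exp ((- u) * D s \<omega>) \<partial>M)"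
    by (rule chernoff_bound[OF measurable_D]) (use integrable_exp_D[OF assms] assms(2) in \<open>auto intro: mult_left_mono\<close>)
  then show ?thesis using laplace_D[OF assms] by simp
qed

text \<open>The null event on which the path stays below \<open>t\<close>; there \<open>L t\<close> is the junk value \<open>Inf {}\<close>.\<close>

definition stuck :: "real \<Rightarrow> 'a set" where
  "stuck t = {\<omega>\<in>space M. \<forall>n::nat. D (real n) \<omega> \<le> t}"

lemma stuck_sets [measurable]: "stuck t \<in> sets M"
  unfolding stuck_def by measurable

lemma prob_stuck: "prob (stuck t) = 0"
proof -
  have le: "prob (stuck t) \<le> exp t * exp (- real n)" for n :: nat
  proof -
    have "prob (stuck t) \<le> prob {\<omega>\<in>space M. D (real n) \<omega> \<le> t}"
      by (rule finite_measure_mono) (auto simp: stuck_def)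
    also have "\<dots> \<le> exp (1 * t) * exp (- real n * 1 powr \<nu>)"
      by (rule prob_D_le) auto
    finally show ?thesis by simp
  qed
  have lim: "(\<lambda>n::nat. exp t * exp (- real n)) \<longlonglongrightarrow> exp t * 0"
    by (intro tendsto_mult tendsto_const filterlim_compose[OF exp_at_bot]
        filterlim_compose[OF filterlim_uminus_at_bot_at_top filterlim_real_sequentially])
  have "prob (stuck t) \<le> 0"
    using tendsto_lowerbound[OF lim always_eventually[OF allI[OF le]]] by simp
  then show ?thesis using measure_nonneg[of M "stuck t"] by linarith
qed

lemma AE_not_stuck: "AE \<omega> in M. \<omega> \<notin> stuck t"
  by (rule AE_not_in) (simp add: null_setsI emeasure_eq_measure prob_stuck)

lemma passage_set_nonempty:
  assumes "\<omega> \<in> space M" "\<omega> \<notin> stuck t"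
  shows "{s. 0 \<le> s \<and> t < D s \<omega>} \<noteq> {}"
proof -
  obtain n :: nat where "t < D (real n) \<omega>" using assms by (auto simp: stuck_def not_le)
  then have "real n \<in> {s. 0 \<le> s \<and> t < D s \<omega>}" by simp
  then show ?thesis by blast
qed

abbreviation L :: "real \<Rightarrow> 'a \<Rightarrow> real" where
  "L \<equiv> inverse_subordinator D"

lemma L_stuck: "\<omega> \<in> stuck t \<Longrightarrow> L t \<omega> = Inf {}"
proof -
  assume "\<omega> \<in> stuck t"
  have "D s \<omega> \<le> t" if "0 \<le> s" for s
  proof -
    obtain n :: nat where "s \<le> real n" using real_arch_simple by blast
    then have "D s \<omega> \<le> D (real n) \<omega>"
      using \<open>\<omega> \<in> stuck t\<close> that by (intro mono_onD[OF mono_D]) (auto simp: stuck_def)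
    also have "\<dots> \<le> t" using \<open>\<omega> \<in> stuck t\<close> by (simp add: stuck_def)
    finally show ?thesis .
  qed
  then have "{s. 0 \<le> s \<and> t < D s \<omega>} = {}" by force
  then show ?thesis unfolding inverse_subordinator_def by (rule arg_cong)
qed

lemma L_nonneg: "\<omega> \<in> space M \<Longrightarrow> \<omega> \<notin> stuck t \<Longrightarrow> 0 \<le> L t \<omega>"
  unfolding inverse_subordinator_eq_first_passage by (rule first_passage_nonneg[OF passage_set_nonempty])

lemma L_le: "0 \<le> s \<Longrightarrow> t < D s \<omega> \<Longrightarrow> L t \<omega> \<le> s"
  unfolding inverse_subordinator_eq_first_passage by (rule first_passage_le)

lemma L_ge: "\<omega> \<in> space M \<Longrightarrow> \<omega> \<notin> stuck t \<Longrightarrow> 0 \<le> s \<Longrightarrow> D s \<omega> \<le> t \<Longrightarrow> s \<le> L t \<omega>"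
  unfolding inverse_subordinator_eq_first_passage by (rule first_passage_ge[OF mono_D _ _ passage_set_nonempty])

lemma measurable_L [measurable]: "L t \<in> borel_measurable M"
proof (rule borel_measurableI_le)
  fix s
  have "{\<omega>\<in>space M. L t \<omega> \<le> s} =
     (stuck t \<inter> {\<omega>\<in>space M. Inf ({}::real set) \<le> s}) \<union>
     ((space M - stuck t) \<inter> {\<omega>\<in>space M. \<forall>n. 0 \<le> s + inverse (real (Suc n))
        \<and> t < D (s + inverse (real (Suc n))) \<omega>})"
  proof (intro set_eqI iffI)
    fix \<omega> assume "\<omega> \<in> {\<omega>\<in>space M. L t \<omega> \<le> s}"
    then show "\<omega> \<in> (stuck t \<inter> {\<omega>\<in>space M. Inf ({}::real set) \<le> s}) \<union>
     ((space M - stuck t) \<inter> {\<omega>\<in>space M. \<forall>n. 0 \<le> s + inverse (real (Suc n))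
        \<and> t < D (s + inverse (real (Suc n))) \<omega>})"
      using L_stuck[of \<omega> t] first_passage_le_iff[OF mono_D passage_set_nonempty, of \<omega> t s]
      by (cases "\<omega> \<in> stuck t") (auto simp: inverse_subordinator_eq_first_passage)
  next
    fix \<omega> assume "\<omega> \<in> (stuck t \<inter> {\<omega>\<in>space M. Inf ({}::real set) \<le> s}) \<union>
     ((space M - stuck t) \<inter> {\<omega>\<in>space M. \<forall>n. 0 \<le> s + inverse (real (Suc n))
        \<and> t < D (s + inverse (real (Suc n))) \<omega>})"
    then show "\<omega> \<in> {\<omega>\<in>space M. L t \<omega> \<le> s}"
      using L_stuck[of \<omega> t] first_passage_le_iff[OF mono_D passage_set_nonempty, of \<omega> t s]
      by (cases "\<omega> \<in> stuck t") (auto simp: inverse_subordinator_eq_first_passage stuck_def)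
  qed
  also have "\<dots> \<in> sets M" by measurable
  finally show "{\<omega>\<in>space M. L t \<omega> \<le> s} \<in> sets M" .
qed

abbreviation L_ceiling :: "real \<Rightarrow> 'a \<Rightarrow> nat" where
  "L_ceiling t \<omega> \<equiv> passage_ceiling (\<lambda>s. D s \<omega>) t"

lemma L_ceiling_bounds:
  assumes "\<omega> \<in> space M" "\<omega> \<notin> stuck t"
  shows "L t \<omega> \<le> real (L_ceiling t \<omega>)" "real (L_ceiling t \<omega> - 1) \<le> L t \<omega>"
  using passage_ceiling_bounds[OF mono_D[OF assms(1)] passage_set_nonempty[OF assms]]
  by (simp_all add: inverse_subordinator_eq_first_passage)

lemma prob_D_le_le_prob_L_ge:
  assumes "0 \<le> s"
  shows "prob {\<omega>\<in>space M. D s \<omega> \<le> t} \<le> prob {\<omega>\<in>space M. s \<le> L t \<omega>}"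
proof -
  have "prob {\<omega>\<in>space M. D s \<omega> \<le> t} \<le> prob ({\<omega>\<in>space M. s \<le> L t \<omega>} \<union> stuck t)"
    by (rule finite_measure_mono) (use L_ge assms in auto)
  also have "\<dots> \<le> prob {\<omega>\<in>space M. s \<le> L t \<omega>} + prob (stuck t)"
    by (rule measure_Un_le) auto
  finally show ?thesis by (simp add: prob_stuck)
qed

lemma prob_L_gt_le_prob_D_le:
  assumes "0 \<le> s"
  shows "prob {\<omega>\<in>space M. s < L t \<omega>} \<le> prob {\<omega>\<in>space M. D s \<omega> \<le> t}"
proof -
  have "prob {\<omega>\<in>space M. s < L t \<omega>} \<le> prob ({\<omega>\<in>space M. D s \<omega> \<le> t} \<union> stuck t)"
    by (rule finite_measure_mono) (use L_le[OF assms] in \<open>auto simp: not_le[symmetric]\<close>)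
  also have "\<dots> \<le> prob {\<omega>\<in>space M. D s \<omega> \<le> t} + prob (stuck t)"
    by (rule measure_Un_le) auto
  finally show ?thesis by (simp add: prob_stuck)
qed

lemma prob_D_gt_le_prob_L_le:
  assumes "0 \<le> s"
  shows "1 - prob {\<omega>\<in>space M. D s \<omega> \<le> t} \<le> prob {\<omega>\<in>space M. L t \<omega> \<le> s}"
proof -
  have "{\<omega>\<in>space M. t < D s \<omega>} = space M - {\<omega>\<in>space M. D s \<omega> \<le> t}" by auto
  then have "1 - prob {\<omega>\<in>space M. D s \<omega> \<le> t} = prob {\<omega>\<in>space M. t < D s \<omega>}"
    by (simp add: prob_compl)
  also have "\<dots> \<le> prob {\<omega>\<in>space M. L t \<omega> \<le> s}"
    by (rule finite_measure_mono) (use L_le assms in auto)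
  finally show ?thesis .
qed

text \<open>Split \<open>E exp (- u D s)\<close> over \<open>D s > T\<close>, \<open>D s \<le> T'\<close> and the rest, which lies in
  \<open>D s \<le> T\<close>; the first two parts are bounded by tilting down to \<open>v\<close> and up to \<open>w\<close>.\<close>

lemma prob_D_le_lower_bound:
  assumes "0 \<le> s" "0 \<le> v" "v \<le> u" "u \<le> w"
  shows "exp (u * T') * (exp (- s * u powr \<nu>) - exp (- s * v powr \<nu>) * exp (- (u - v) * T)
      - exp (- s * w powr \<nu>) * exp ((w - u) * T')) \<le> prob {\<omega>\<in>space M. D s \<omega> \<le> T}"
proof -
  define above where "above = {\<omega>\<in>space M. T < D s \<omega>}"
  define below where "below = {\<omega>\<in>space M. D s \<omega> \<le> T'}"
  define between where "between = {\<omega>\<in>space M. D s \<omega> \<le> T}"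
  have [measurable]: "above \<in> sets M" "below \<in> sets M" "between \<in> sets M"
    unfolding above_def below_def between_def by measurable
  have int: "integrable M (\<lambda>\<omega>. exp ((- u + (u - v)) * D s \<omega>))" "integrable M (\<lambda>\<omega>. exp ((- u + (u - w)) * D s \<omega>))"
    using integrable_exp_D[OF assms(1), of v] integrable_exp_D[OF assms(1), of w] assms by simp_all
  have "(u - v) * T \<le> (u - v) * D s \<omega>" if "\<omega> \<in> above" for \<omega>
    using assms that by (auto simp: above_def intro: mult_left_mono)
  note tilt_above = indicator_exp_tilt[OF measurable_D int(1) \<open>above \<in> sets M\<close> this]
  have "(u - w) * T' \<le> (u - w) * D s \<omega>" if "\<omega> \<in> below" for \<omega>
    using assms that by (auto simp: below_def intro: mult_left_mono_neg)
  note tilt_below = indicator_exp_tilt[OF measurable_D int(2) \<open>below \<in> sets M\<close> this]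
  have "integrable M (indicator between :: 'a \<Rightarrow> real)"
    by (rule integrable_real_indicator) (auto simp: less_top[symmetric])
  then have int_between: "integrable M (\<lambda>\<omega>. indicator between \<omega> * exp (- u * T'))" by simp
  have pw: "exp (- u * D s \<omega>) \<le> indicator above \<omega> * exp (- u * D s \<omega>) + indicator below \<omega> * exp (- u * D s \<omega>)
      + indicator between \<omega> * exp (- u * T')" if "\<omega> \<in> space M" for \<omega>
  proof (cases "T < D s \<omega> \<or> D s \<omega> \<le> T'")
    case False
    then have "- u * D s \<omega> \<le> - u * T'" using assms by (intro mult_left_mono_neg) auto
    then show ?thesis using that False by (auto simp: above_def below_def between_def)
  qed (use that in \<open>auto simp: above_def below_def indicator_def\<close>)
  have "exp (- s * u powr \<nu>) = (\<integral>\<omega>. exp (- u * D s \<omega>) \<partial>M)"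
    using laplace_D assms by simp
  also have "\<dots> \<le> (\<integral>\<omega>. indicator above \<omega> * exp (- u * D s \<omega>) + indicator below \<omega> * exp (- u * D s \<omega>)
      + indicator between \<omega> * exp (- u * T') \<partial>M)"
    using tilt_above(1) tilt_below(1) int_between assms
    by (intro integral_mono_AE integrable_exp_D Bochner_Integration.integrable_add AE_I2 pw) auto
  also have "\<dots> = (\<integral>\<omega>. indicator above \<omega> * exp (- u * D s \<omega>) \<partial>M)
      + (\<integral>\<omega>. indicator below \<omega> * exp (- u * D s \<omega>) \<partial>M) + prob between * exp (- u * T')"
    using tilt_above(1) tilt_below(1) int_between by simp
  also have "\<dots> \<le> exp (- (u - v) * T) * exp (- s * v powr \<nu>) + exp (- (u - w) * T') * exp (- s * w powr \<nu>)
      + prob between * exp (- u * T')"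
    using tilt_above(2) tilt_below(2) laplace_D[OF assms(1), of v] laplace_D[OF assms(1), of w] assms
    by simp
  finally have "exp (u * T') * (exp (- s * u powr \<nu>) - exp (- s * v powr \<nu>) * exp (- (u - v) * T)
      - exp (- s * w powr \<nu>) * exp ((w - u) * T')) \<le> exp (u * T') * (prob between * exp (- u * T'))"
    by (intro mult_left_mono) (auto simp: algebra_simps)
  also have "\<dots> = prob between" by (simp add: exp_minus field_simps)
  finally show ?thesis unfolding between_def .
qed

definition mgf_L :: "real \<Rightarrow> real \<Rightarrow> ennreal" where
  "mgf_L t c = (\<integral>\<^sup>+\<omega>. ennreal (exp (c * L t \<omega>)) \<partial>M)"

lemma mgf_L_ge_prob:
  assumes "{\<omega>\<in>space M. P \<omega>} \<in> sets M" "\<And>\<omega>. \<omega> \<in> space M \<Longrightarrow> P \<omega> \<Longrightarrow> c * s \<le> c * L t \<omega>"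
  shows "ennreal (exp (c * s) * prob {\<omega>\<in>space M. P \<omega>}) \<le> mgf_L t c"
proof -
  have "ennreal (exp (c * s) * prob {\<omega>\<in>space M. P \<omega>})
      = (\<integral>\<^sup>+\<omega>. ennreal (exp (c * s)) * indicator {\<omega>\<in>space M. P \<omega>} \<omega> \<partial>M)"
    using assms(1) by (simp add: nn_integral_cmult_indicator emeasure_eq_measure ennreal_mult'')
  also have "\<dots> \<le> mgf_L t c"
    unfolding mgf_L_def using assms(2) by (intro nn_integral_mono) (auto intro!: ennreal_leI simp: indicator_def)
  finally show ?thesis .
qed

lemma exp_L_le_tail_sum:
  assumes "\<omega> \<in> space M" "\<omega> \<notin> stuck t" "0 < c"
  shows "ennreal (exp (c * L t \<omega>))
    \<le> 1 + (\<Sum>k. ennreal (exp (c * (real k + 1))) * indicator {\<omega>\<in>space M. real k < L t \<omega>} \<omega>)"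
proof (cases "L t \<omega> = 0")
  case False
  then have "0 < L t \<omega>" using L_nonneg[OF assms(1,2)] by simp
  define k where "k = nat (\<lceil>L t \<omega>\<rceil> - 1)"
  have "real k + 1 = of_int \<lceil>L t \<omega>\<rceil>"
    using \<open>0 < L t \<omega>\<close> by (simp add: k_def)
  then have "real k < L t \<omega>" "L t \<omega> \<le> real k + 1"
    by (linarith, simp)
  then have "ennreal (exp (c * L t \<omega>)) \<le> ennreal (exp (c * (real k + 1))) * indicator {\<omega>\<in>space M. real k < L t \<omega>} \<omega>"
    using assms by (auto intro!: ennreal_leI)
  also have "\<dots> \<le> (\<Sum>k. ennreal (exp (c * (real k + 1))) * indicator {\<omega>\<in>space M. real k < L t \<omega>} \<omega>)"
    using sum_le_suminf[OF summableI, of "{k}"] by simp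
  finally show ?thesis by (simp add: add_increasing)
qed simp

lemma mgf_L_le_geometric:
  assumes "0 < c" "0 \<le> u" "c < u powr \<nu>"
  shows "mgf_L t c \<le> ennreal (1 + exp c / (1 - exp (c - u powr \<nu>)) * exp (u * t))"
proof -
  define q where "q = exp (c - u powr \<nu>)"
  have "0 < q" "q < 1" using assms by (auto simp: q_def)
  have "mgf_L t c \<le> (\<integral>\<^sup>+\<omega>. 1 + (\<Sum>k. ennreal (exp (c * (real k + 1))) * indicator {\<omega>\<in>space M. real k < L t \<omega>} \<omega>) \<partial>M)"
    unfolding mgf_L_def
    by (rule nn_integral_mono_AE, rule AE_mp[OF AE_not_stuck AE_I2]) (use exp_L_le_tail_sum assms in auto)
  also have "\<dots> = 1 + (\<Sum>k. ennreal (exp (c * (real k + 1))) * emeasure M {\<omega>\<in>space M. real k < L t \<omega>})"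
    by (subst nn_integral_add) (auto simp: nn_integral_suminf nn_integral_cmult_indicator emeasure_space_1)
  also have "\<dots> \<le> 1 + (\<Sum>k. ennreal (exp (c + u * t) * q ^ k))"
  proof (intro add_left_mono suminf_le summableI)
    fix k :: nat
    have "prob {\<omega>\<in>space M. real k < L t \<omega>} \<le> exp (u * t) * exp (- real k * u powr \<nu>)"
      using prob_L_gt_le_prob_D_le[of "real k" t] prob_D_le[of "real k" u t] assms(2) by simp
    then have "exp (c * (real k + 1)) * prob {\<omega>\<in>space M. real k < L t \<omega>}
        \<le> exp (c * (real k + 1)) * (exp (u * t) * exp (- real k * u powr \<nu>))"
      by (rule mult_left_mono) simp
    also have "\<dots> = exp (c + u * t) * q ^ k"
      unfolding q_def by (simp add: exp_of_nat_mult[symmetric] exp_add[symmetric] algebra_simps)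
    finally show "ennreal (exp (c * (real k + 1))) * emeasure M {\<omega>\<in>space M. real k < L t \<omega>}
        \<le> ennreal (exp (c + u * t) * q ^ k)"
      by (simp add: emeasure_eq_measure ennreal_mult''[symmetric] ennreal_leI)
  qed
  also have "(\<Sum>k. ennreal (exp (c + u * t) * q ^ k)) = ennreal (exp (c + u * t) * (1 / (1 - q)))"
    using \<open>0 < q\<close> \<open>q < 1\<close> by (intro suminf_ennreal_eq sums_mult geometric_sums) auto
  also have "1 + ennreal (exp (c + u * t) * (1 / (1 - q))) = ennreal (1 + exp c / (1 - q) * exp (u * t))"
    using \<open>q < 1\<close> by (subst ennreal_plus) (auto simp: exp_add)
  finally show ?thesis unfolding q_def .
qed

lemma mgf_L_upper:
  assumes "0 < c" "0 < \<epsilon>"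
  shows "\<forall>\<^sub>F t in at_top. mgf_L t c \<le> ennreal (exp (t * (c powr (1 / \<nu>) + \<epsilon>)))"
proof -
  define u where "u = c powr (1 / \<nu>) + \<epsilon> / 2"
  have "0 < u" using assms by (simp add: u_def add_pos_pos)
  have "c = (c powr (1 / \<nu>)) powr \<nu>" using assms \<nu> by (simp add: powr_powr)
  also have "\<dots> < u powr \<nu>" using assms \<nu> by (intro powr_less_mono2) (auto simp: u_def)
  finally have "c < u powr \<nu>" .
  define C where "C = exp c / (1 - exp (c - u powr \<nu>))"
  have "0 < C" using \<open>c < u powr \<nu>\<close> by (simp add: C_def)
  show ?thesis
    using eventually_ge_at_top[of 0] eventually_ge_at_top[of "ln (1 + C) / (\<epsilon> / 2)"]
  proof eventually_elim
    case (elim t)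
    then have "ln (1 + C) \<le> t * (\<epsilon> / 2)" using assms by (simp add: field_simps)
    then have "exp (ln (1 + C)) \<le> exp (t * (\<epsilon> / 2))" by simp
    then have "1 + C \<le> exp (t * (\<epsilon> / 2))" using \<open>0 < C\<close> by simp
    have "1 \<le> exp (u * t)" using \<open>0 < u\<close> elim by simp
    have "1 + C * exp (u * t) \<le> (1 + C) * exp (u * t)"
      using \<open>1 \<le> exp (u * t)\<close> by (simp add: algebra_simps)
    also have "\<dots> \<le> exp (t * (\<epsilon> / 2)) * exp (u * t)"
      using \<open>1 + C \<le> exp (t * (\<epsilon> / 2))\<close> by (rule mult_right_mono) simp
    also have "\<dots> = exp (t * (c powr (1 / \<nu>) + \<epsilon>))"
      by (simp add: u_def exp_add[symmetric] algebra_simps)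
    finally have "1 + C * exp (u * t) \<le> exp (t * (c powr (1 / \<nu>) + \<epsilon>))" .
    then show ?case
      using mgf_L_le_geometric[OF assms(1) less_imp_le[OF \<open>0 < u\<close>] \<open>c < u powr \<nu>\<close>, of t]
      unfolding C_def[symmetric] by (meson ennreal_leI order_trans)
  qed
qed

lemma prob_D_le_at_linear_time:
  assumes "0 < \<rho>" "0 < \<delta>" "\<delta> \<le> 1/2"
    and a: "a = \<rho> powr (1 - \<nu>) / \<nu>" and u: "u = \<rho> * (1 + \<delta> / 4)" and w: "w = \<rho> * (1 + \<delta> / 2)"
  shows "\<forall>\<^sub>F t in at_top.
    exp (u * ((1 - \<delta>) * t)) * exp (- (a * t) * u powr \<nu>) * (1 / 2) \<le> prob {\<omega>\<in>space M. D (a * t) \<omega> \<le> t}"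
proof -
  define \<kappa>\<^sub>1 where "\<kappa>\<^sub>1 = a * \<rho> powr \<nu> + (u - \<rho>) - a * u powr \<nu>"
  define \<kappa>\<^sub>2 where "\<kappa>\<^sub>2 = a * w powr \<nu> - a * u powr \<nu> - (w - u) * (1 - \<delta>)"
  have "0 < \<kappa>\<^sub>1" "0 < \<kappa>\<^sub>2"
    using stable_tilt_exponents[OF assms(1) \<nu> assms(2-6)] by (simp_all add: \<kappa>\<^sub>1_def \<kappa>\<^sub>2_def)
  have "0 \<le> a" "\<rho> \<le> u" "u \<le> w" using assms(1,2) \<nu> by (simp_all add: a u w)
  show ?thesis
    using eventually_ge_at_top[of 0] eventually_ge_at_top[of "4 / \<kappa>\<^sub>1"] eventually_ge_at_top[of "4 / \<kappa>\<^sub>2"]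
  proof eventually_elim
    case (elim t)
    define s where "s = a * t"
    have "0 \<le> s" using \<open>0 \<le> a\<close> elim(1) by (simp add: s_def)
    have r\<^sub>1: "exp (- s * \<rho> powr \<nu>) * exp (- (u - \<rho>) * t) = exp (- s * u powr \<nu>) * exp (- t * \<kappa>\<^sub>1)"
      by (simp add: s_def \<kappa>\<^sub>1_def exp_add[symmetric] algebra_simps)
    have r\<^sub>2: "exp (- s * w powr \<nu>) * exp ((w - u) * ((1 - \<delta>) * t)) = exp (- s * u powr \<nu>) * exp (- t * \<kappa>\<^sub>2)"
      by (simp add: s_def \<kappa>\<^sub>2_def exp_add[symmetric] algebra_simps)
    have "exp (u * ((1 - \<delta>) * t)) * exp (- s * u powr \<nu>) * (1 / 2)
        \<le> exp (u * ((1 - \<delta>) * t)) * exp (- s * u powr \<nu>) * (1 - exp (- t * \<kappa>\<^sub>1) - exp (- t * \<kappa>\<^sub>2))"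
    proof (rule mult_left_mono)
      have "exp (- t * \<kappa>\<^sub>1) \<le> 1 / 4" "exp (- t * \<kappa>\<^sub>2) \<le> 1 / 4"
        by (rule exp_neg_le_inverse[OF \<open>0 < \<kappa>\<^sub>1\<close> _ elim(2)], simp,
            rule exp_neg_le_inverse[OF \<open>0 < \<kappa>\<^sub>2\<close> _ elim(3)], simp)
      then show "1 / 2 \<le> 1 - exp (- t * \<kappa>\<^sub>1) - exp (- t * \<kappa>\<^sub>2)" by linarith
    qed simp
    also have "\<dots> = exp (u * ((1 - \<delta>) * t)) * (exp (- s * u powr \<nu>) - exp (- s * \<rho> powr \<nu>) * exp (- (u - \<rho>) * t)
        - exp (- s * w powr \<nu>) * exp ((w - u) * ((1 - \<delta>) * t)))"
      unfolding r\<^sub>1 r\<^sub>2 by (simp add: right_diff_distrib mult.assoc del: mult_exp_exp)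
    also have "\<dots> \<le> prob {\<omega>\<in>space M. D s \<omega> \<le> t}"
      using \<open>0 \<le> s\<close> \<open>0 < \<rho>\<close> \<open>\<rho> \<le> u\<close> \<open>u \<le> w\<close> by (intro prob_D_le_lower_bound) auto
    finally show ?case by (simp add: s_def)
  qed
qed

lemma mgf_L_lower:
  assumes "0 < c" "0 < \<epsilon>"
  shows "\<forall>\<^sub>F t in at_top. ennreal (exp (t * (c powr (1 / \<nu>) - \<epsilon>))) \<le> mgf_L t c"
proof -
  define \<rho> where "\<rho> = c powr (1 / \<nu>)"
  have "0 < \<rho>" "\<rho> powr \<nu> = c" using assms \<nu> by (simp_all add: \<rho>_def powr_powr)
  define \<delta> where "\<delta> = min (1/2) (\<epsilon> / (4 * \<rho> + 1))"
  have "0 < \<delta>" using assms \<open>0 < \<rho>\<close> by (simp add: \<delta>_def)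
  have "\<delta> \<le> 1/2" unfolding \<delta>_def by (rule min.cobounded1)
  define a where "a = \<rho> powr (1 - \<nu>) / \<nu>"
  define u where "u = \<rho> * (1 + \<delta> / 4)"
  define w where "w = \<rho> * (1 + \<delta> / 2)"
  have "0 \<le> a" using \<nu> by (simp add: a_def)
  have "\<delta> * u \<le> \<epsilon> / (4 * \<rho> + 1) * (2 * \<rho>)"
    using \<open>0 < \<delta>\<close> \<open>\<delta> \<le> 1/2\<close> \<open>0 < \<rho>\<close> by (intro mult_mono) (auto simp: \<delta>_def u_def)
  also have "\<dots> \<le> \<epsilon> / 2" using \<open>0 < \<rho>\<close> assms by (simp add: field_simps)
  finally have "\<delta> * u \<le> \<epsilon> / 2" .
  moreover have "0 < a * \<rho> powr \<nu> + (u - \<rho>) - a * u powr \<nu>"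
    using stable_tilt_exponents[OF \<open>0 < \<rho>\<close> \<nu> \<open>0 < \<delta>\<close> \<open>\<delta> \<le> 1/2\<close> a_def u_def w_def] by simp
  ultimately have exponent: "\<rho> - \<epsilon> / 2 \<le> c * a + u * (1 - \<delta>) - a * u powr \<nu>"
    using \<open>\<rho> powr \<nu> = c\<close> by (simp add: algebra_simps)
  show ?thesis
    using prob_D_le_at_linear_time[OF \<open>0 < \<rho>\<close> \<open>0 < \<delta>\<close> \<open>\<delta> \<le> 1/2\<close> a_def u_def w_def]
      eventually_ge_at_top[of 0] eventually_ge_at_top[of "2 / (\<epsilon> / 2)"]
  proof eventually_elim
    case (elim t)
    have "exp (t * (\<rho> - \<epsilon>)) = exp (t * (\<rho> - \<epsilon> / 2)) * exp (- t * (\<epsilon> / 2))"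
      by (simp add: exp_add[symmetric] algebra_simps)
    also have "\<dots> \<le> exp (t * (c * a + u * (1 - \<delta>) - a * u powr \<nu>)) * (1 / 2)"
      using exponent elim(2,3) exp_neg_le_inverse[of "\<epsilon> / 2" 2 t] assms
      by (intro mult_mono) (auto intro: mult_left_mono)
    also have "\<dots> = exp (c * (a * t)) * (exp (u * ((1 - \<delta>) * t)) * exp (- (a * t) * u powr \<nu>) * (1 / 2))"
      by (simp add: exp_add[symmetric] algebra_simps)
    also have "\<dots> \<le> exp (c * (a * t)) * prob {\<omega>\<in>space M. D (a * t) \<omega> \<le> t}"
      using elim(1) by (rule mult_left_mono) simp
    also have "\<dots> \<le> exp (c * (a * t)) * prob {\<omega>\<in>space M. a * t \<le> L t \<omega>}"
      using \<open>0 \<le> a\<close> elim(2) by (intro mult_left_mono prob_D_le_le_prob_L_ge) auto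
    finally have "ennreal (exp (t * (\<rho> - \<epsilon>))) \<le> ennreal (exp (c * (a * t)) * prob {\<omega>\<in>space M. a * t \<le> L t \<omega>})"
      by (rule ennreal_leI)
    also have "\<dots> \<le> mgf_L t c"
      using \<open>0 < c\<close> by (intro mgf_L_ge_prob) (auto intro: mult_left_mono)
    finally show ?case by (simp add: \<rho>_def)
  qed
qed

lemma mgf_L_nonpos_le_1:
  assumes "c \<le> 0"
  shows "mgf_L t c \<le> 1"
proof -
  have "mgf_L t c \<le> (\<integral>\<^sup>+\<omega>. 1 \<partial>M)"
    unfolding mgf_L_def using AE_not_stuck[of t]
    by (rule nn_integral_mono_AE[OF AE_mp[OF _ AE_I2]]) (use L_nonneg assms in \<open>auto simp: mult_nonpos_nonneg\<close>)
  then show ?thesis by (simp add: emeasure_space_1)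
qed

lemma mgf_L_nonpos_lower:
  assumes "c \<le> 0" "0 < \<epsilon>"
  shows "\<forall>\<^sub>F t in at_top. ennreal (exp (t * (0 - \<epsilon>))) \<le> mgf_L t c"
proof -
  define \<sigma> where "\<sigma> = \<epsilon> / (2 * (\<bar>c\<bar> + 1))"
  have "0 < \<sigma>" using assms by (simp add: \<sigma>_def)
  have "\<bar>c\<bar> * \<sigma> \<le> (\<bar>c\<bar> + 1) * \<sigma>" using \<open>0 < \<sigma>\<close> by (intro mult_right_mono) auto
  also have "\<dots> = \<epsilon> / 2"
    using abs_ge_zero[of c] unfolding \<sigma>_def by (simp add: field_simps)
  finally have "- (\<epsilon> / 2) \<le> c * \<sigma>" using assms(1) by (simp add: abs_of_nonpos)
  define u where "u = (\<sigma> / 2) powr (1 / (1 - \<nu>))"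
  have "0 < u" using \<open>0 < \<sigma>\<close> by (simp add: u_def)
  have "u powr (1 - \<nu>) = \<sigma> / 2" using \<open>0 < \<sigma>\<close> \<nu> by (simp add: u_def powr_powr)
  then have "u powr \<nu> * (\<sigma> / 2) = u powr \<nu> * u powr (1 - \<nu>)" by simp
  also have "\<dots> = u" using \<open>0 < u\<close> by (simp add: powr_add[symmetric])
  finally have "u powr \<nu> * (\<sigma> / 2) = u" .
  then have "\<sigma> * u powr \<nu> - u = \<sigma> * u powr \<nu> - u powr \<nu> * (\<sigma> / 2)" by (simp only:)
  also have "\<dots> = u powr \<nu> * (\<sigma> / 2)" by (simp add: field_simps)
  finally have "\<sigma> * u powr \<nu> - u = u powr \<nu> * (\<sigma> / 2)" .
  then have "0 < \<sigma> * u powr \<nu> - u" using \<open>0 < u\<close> \<open>0 < \<sigma>\<close> by simp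
  show ?thesis
    using eventually_ge_at_top[of 0] eventually_ge_at_top[of "2 / (\<sigma> * u powr \<nu> - u)"]
      eventually_ge_at_top[of "2 / (\<epsilon> / 2)"]
  proof eventually_elim
    case (elim t)
    define s where "s = \<sigma> * t"
    have "0 \<le> s" using \<open>0 < \<sigma>\<close> elim(1) by (simp add: s_def)
    have "prob {\<omega>\<in>space M. D s \<omega> \<le> t} \<le> exp (u * t) * exp (- s * u powr \<nu>)"
      using \<open>0 \<le> s\<close> \<open>0 < u\<close> by (intro prob_D_le) auto
    also have "\<dots> = exp (- t * (\<sigma> * u powr \<nu> - u))"
      by (simp add: s_def exp_add[symmetric] algebra_simps)
    also have "\<dots> \<le> 1 / 2"
      using exp_neg_le_inverse[OF \<open>0 < \<sigma> * u powr \<nu> - u\<close>, of 2 t] elim(2) by simp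
    finally have "1 / 2 \<le> prob {\<omega>\<in>space M. L t \<omega> \<le> s}"
      using prob_D_gt_le_prob_L_le[OF \<open>0 \<le> s\<close>, of t] by simp
    have "exp (t * (0 - \<epsilon>)) = exp (- t * (\<epsilon> / 2)) * exp (- t * (\<epsilon> / 2))"
      by (simp add: exp_add[symmetric])
    also have "\<dots> \<le> exp (c * s) * (1 / 2)"
    proof (rule mult_mono)
      have "t * (- (\<epsilon> / 2)) \<le> t * (c * \<sigma>)"
        using \<open>- (\<epsilon> / 2) \<le> c * \<sigma>\<close> elim(1) by (rule mult_left_mono)
      then show "exp (- t * (\<epsilon> / 2)) \<le> exp (c * s)" by (simp add: s_def algebra_simps)
      show "exp (- t * (\<epsilon> / 2)) \<le> 1 / 2"
        using exp_neg_le_inverse[of "\<epsilon> / 2" 2 t] elim(3) assms(2) by simp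
    qed auto
    also have "\<dots> \<le> exp (c * s) * prob {\<omega>\<in>space M. L t \<omega> \<le> s}"
      using \<open>1 / 2 \<le> _\<close> by (intro mult_left_mono) auto
    finally have "ennreal (exp (t * (0 - \<epsilon>))) \<le> ennreal (exp (c * s) * prob {\<omega>\<in>space M. L t \<omega> \<le> s})"
      by (rule ennreal_leI)
    also have "\<dots> \<le> mgf_L t c"
      using assms(1) by (intro mgf_L_ge_prob) (auto intro: mult_left_mono_neg)
    finally show ?case .
  qed
qed

lemma has_exp_rate_mgf_L: "has_exp_rate (\<lambda>t. mgf_L t c) (max 0 c powr (1 / \<nu>))"
proof (cases "0 < c")
  case True
  then show ?thesis using mgf_L_lower mgf_L_upper by (intro has_exp_rateI) auto
next
  case False
  show ?thesis
  proof (rule has_exp_rateI)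
    fix \<epsilon> :: real assume "0 < \<epsilon>"
    show "\<forall>\<^sub>F t in at_top. ennreal (exp (t * (max 0 c powr (1 / \<nu>) - \<epsilon>))) \<le> mgf_L t c"
      using mgf_L_nonpos_lower[of c \<epsilon>] False \<open>0 < \<epsilon>\<close> by simp
    show "\<forall>\<^sub>F t in at_top. mgf_L t c \<le> ennreal (exp (t * (max 0 c powr (1 / \<nu>) + \<epsilon>)))"
      using eventually_ge_at_top[of 0]
    proof eventually_elim
      case (elim t)
      then have "1 \<le> exp (t * \<epsilon>)" using \<open>0 < \<epsilon>\<close> by simp
      then show ?case using mgf_L_nonpos_le_1[of c t] False by (simp add: order_trans ennreal_leI)
    qed
  qed
qed

definition mgf_L_grid :: "bool \<Rightarrow> real \<Rightarrow> real \<Rightarrow> ennreal" where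
  "mgf_L_grid up t c = (\<integral>\<^sup>+\<omega>. ennreal (exp (c * real (grid_point up (L_ceiling t \<omega>)))) \<partial>M)"

lemma has_exp_rate_mgf_L_grid: "has_exp_rate (\<lambda>t. mgf_L_grid up t c) (max 0 c powr (1 / \<nu>))"
proof (rule has_exp_rate_bounded_factor[OF has_exp_rate_mgf_L])
  fix t
  have close: "exp (- \<bar>c\<bar>) * exp (c * L t \<omega>) \<le> exp (c * real (grid_point up (L_ceiling t \<omega>)))
    \<and> exp (c * real (grid_point up (L_ceiling t \<omega>))) \<le> exp \<bar>c\<bar> * exp (c * L t \<omega>)"
    if "\<omega> \<in> space M" "\<omega> \<notin> stuck t" for \<omega>
  proof -
    have "\<bar>real (grid_point up (L_ceiling t \<omega>)) - L t \<omega>\<bar> \<le> 1"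
      using L_ceiling_bounds[OF that] L_nonneg[OF that] by (auto simp: grid_point_def)
    then have "\<bar>c * real (grid_point up (L_ceiling t \<omega>)) - c * L t \<omega>\<bar> \<le> \<bar>c\<bar>"
      by (metis abs_mult mult.right_neutral mult_left_mono right_diff_distrib abs_ge_zero)
    then show ?thesis by (simp add: exp_add[symmetric] abs_le_iff)
  qed
  have "ennreal (exp (- \<bar>c\<bar>)) * mgf_L t c = (\<integral>\<^sup>+\<omega>. ennreal (exp (- \<bar>c\<bar>) * exp (c * L t \<omega>)) \<partial>M)"
    unfolding mgf_L_def by (subst nn_integral_cmult[symmetric]) (auto simp: ennreal_mult'')
  also have "\<dots> \<le> mgf_L_grid up t c"
    unfolding mgf_L_grid_def
    by (rule nn_integral_mono_AE, rule AE_mp[OF AE_not_stuck[of t] AE_I2]) (use close in \<open>auto intro: ennreal_leI\<close>)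
  finally show "ennreal (exp (- \<bar>c\<bar>)) * mgf_L t c \<le> mgf_L_grid up t c" .
  have "mgf_L_grid up t c \<le> (\<integral>\<^sup>+\<omega>. ennreal (exp \<bar>c\<bar> * exp (c * L t \<omega>)) \<partial>M)"
    unfolding mgf_L_grid_def
    by (rule nn_integral_mono_AE, rule AE_mp[OF AE_not_stuck[of t] AE_I2]) (use close in \<open>auto intro: ennreal_leI\<close>)
  also have "\<dots> = ennreal (exp \<bar>c\<bar>) * mgf_L t c"
    unfolding mgf_L_def by (subst nn_integral_cmult[symmetric]) (auto simp: ennreal_mult'')
  finally show "mgf_L_grid up t c \<le> ennreal (exp \<bar>c\<bar>) * mgf_L t c" .
qed

end

section \<open>Poisson processes at random times\<close>

lemma dyadic_approx_from_right:
  fixes s :: real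
  shows "(\<lambda>n. (of_int \<lfloor>2 ^ n * s\<rfloor> + 1) / 2 ^ n) \<longlonglongrightarrow> s"
    and "s < (of_int \<lfloor>2 ^ n * s\<rfloor> + 1) / 2 ^ n"
proof -
  have lower: "s < (of_int \<lfloor>2 ^ n * s\<rfloor> + 1) / 2 ^ n" for n :: nat
  proof -
    have "2 ^ n * s < of_int \<lfloor>2 ^ n * s\<rfloor> + 1" by linarith
    then show ?thesis by (simp add: field_simps)
  qed
  have upper: "(of_int \<lfloor>2 ^ n * s\<rfloor> + 1) / 2 ^ n \<le> s + (1 / 2) ^ n" for n :: nat
  proof -
    have "of_int \<lfloor>2 ^ n * s\<rfloor> + 1 \<le> 2 ^ n * s + 1" by linarith
    then show ?thesis by (simp add: field_simps power_divide)
  qed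
  show "s < (of_int \<lfloor>2 ^ n * s\<rfloor> + 1) / 2 ^ n" by (rule lower)
  have "(\<lambda>n. s + (1 / 2) ^ n) \<longlonglongrightarrow> s + 0"
    by (intro tendsto_add tendsto_const LIMSEQ_realpow_zero) auto
  then have "(\<lambda>n. s + (1 / 2) ^ n) \<longlonglongrightarrow> s" by simp
  show "(\<lambda>n. (of_int \<lfloor>2 ^ n * s\<rfloor> + 1) / 2 ^ n) \<longlonglongrightarrow> s"
    by (rule tendsto_sandwich[OF always_eventually always_eventually tendsto_const \<open>_ \<longlonglongrightarrow> s\<close>])
      (use lower upper in \<open>auto intro: less_imp_le\<close>)
qed

text \<open>The random time is approximated by dyadic rationals from the right; negative times, confined
  by the last hypothesis to a single junk value \<open>c\<close>, are treated separately.\<close>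

lemma measurable_at_random_time:
  fixes N :: "real \<Rightarrow> 'a \<Rightarrow> real" and T :: "'a \<Rightarrow> real"
  assumes [measurable]: "\<And>s. N s \<in> borel_measurable M" "T \<in> borel_measurable M"
    and right_cont: "\<And>\<omega> s. \<omega> \<in> space M \<Longrightarrow> 0 \<le> s \<Longrightarrow> continuous (at_right s) (\<lambda>r. N r \<omega>)"
    and T_neg: "\<And>\<omega>. \<omega> \<in> space M \<Longrightarrow> T \<omega> < 0 \<Longrightarrow> T \<omega> = c"
  shows "(\<lambda>\<omega>. N (T \<omega>) \<omega>) \<in> borel_measurable M"
proof -
  define A where "A n \<omega> = N ((of_int \<lfloor>2 ^ n * max 0 (T \<omega>)\<rfloor> + 1) / 2 ^ n) \<omega>" for n :: nat and \<omega>
  have A_measurable: "A n \<in> borel_measurable M" for n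
  proof -
    have "(\<lambda>\<omega>. (\<lambda>j::int. N ((of_int j + 1) / 2 ^ n) \<omega>) \<lfloor>2 ^ n * max 0 (T \<omega>)\<rfloor>) \<in> borel_measurable M"
      by (rule measurable_compose_countable[where f = "\<lambda>j \<omega>. N ((of_int j + 1) / 2 ^ n) \<omega>"]) measurable
    then show ?thesis unfolding A_def by simp
  qed
  have A_tendsto: "(\<lambda>n. A n \<omega>) \<longlonglongrightarrow> N (max 0 (T \<omega>)) \<omega>" if "\<omega> \<in> space M" for \<omega>
  proof -
    define s where "s = max 0 (T \<omega>)"
    have "((\<lambda>r. N r \<omega>) \<longlongrightarrow> N s \<omega>) (at_right s)"
      using right_cont[OF that] by (simp add: s_def continuous_within)
    moreover have "filterlim (\<lambda>n. (of_int \<lfloor>2 ^ n * s\<rfloor> + 1) / 2 ^ n) (at_right s) sequentially"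
      unfolding filterlim_at using dyadic_approx_from_right[of s]
      by (auto intro!: always_eventually simp: less_imp_neq[symmetric])
    ultimately show ?thesis unfolding A_def s_def[symmetric] by (rule filterlim_compose)
  qed
  have [measurable]: "(\<lambda>\<omega>. N (max 0 (T \<omega>)) \<omega>) \<in> borel_measurable M"
    by (rule borel_measurable_LIMSEQ_real[OF A_tendsto A_measurable])
  have "(\<lambda>\<omega>. if T \<omega> < 0 then N c \<omega> else N (max 0 (T \<omega>)) \<omega>) \<in> borel_measurable M"
    by measurable
  then show ?thesis
    by (rule measurable_cong[THEN iffD1, rotated]) (use T_neg in auto)
qed

lemma (in prob_space) indep_var_nn_integral_mult:
  assumes "indep_var borel X borel Y" "\<And>\<omega>. 0 \<le> X \<omega>" "\<And>\<omega>. 0 \<le> Y \<omega>"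
  shows "(\<integral>\<^sup>+\<omega>. ennreal (X \<omega> * Y \<omega>) \<partial>M) = (\<integral>\<^sup>+\<omega>. ennreal (X \<omega>) \<partial>M) * (\<integral>\<^sup>+\<omega>. ennreal (Y \<omega>) \<partial>M)"
proof -
  have "indep_var borel (ennreal \<circ> X) borel (ennreal \<circ> Y)"
    by (rule indep_var_compose[OF assms(1)]) auto
  moreover have "case_bool (borel :: ennreal measure) borel = (\<lambda>_. borel)"
    by (rule ext) (simp split: bool.split)
  ultimately have indep: "indep_vars (\<lambda>_. borel) (case_bool (ennreal \<circ> X) (ennreal \<circ> Y)) UNIV"
    unfolding indep_var_def by (simp only:)
  have "(\<integral>\<^sup>+\<omega>. (\<Prod>i\<in>UNIV. case_bool (ennreal \<circ> X) (ennreal \<circ> Y) i \<omega>) \<partial>M)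
      = (\<Prod>i\<in>UNIV. \<integral>\<^sup>+\<omega>. case_bool (ennreal \<circ> X) (ennreal \<circ> Y) i \<omega> \<partial>M)"
    by (rule indep_vars_nn_integral[OF _ indep]) auto
  then show ?thesis using assms(2,3) by (simp add: UNIV_bool ennreal_mult mult.commute comp_def)
qed

lemma (in prob_space) indep_vars_imp_indep_var:
  assumes "indep_vars (\<lambda>_. M') X I" "i \<in> I" "j \<in> I" "i \<noteq> j"
  shows "indep_var M' (X i) M' (X j)"
proof -
  have "indep_var (Pi\<^sub>M {i} (\<lambda>_. M')) (\<lambda>\<omega>. restrict (\<lambda>i. X i \<omega>) {i}) (Pi\<^sub>M {j} (\<lambda>_. M')) (\<lambda>\<omega>. restrict (\<lambda>i. X i \<omega>) {j})"
    by (rule indep_var_restrict[OF assms(1)]) (use assms in auto)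
  then have "indep_var M' ((\<lambda>h. h i) \<circ> (\<lambda>\<omega>. restrict (\<lambda>i. X i \<omega>) {i})) M' ((\<lambda>h. h j) \<circ> (\<lambda>\<omega>. restrict (\<lambda>i. X i \<omega>) {j}))"
    by (rule indep_var_compose) (auto intro: measurable_component_singleton)
  then show ?thesis by (simp add: comp_def)
qed

locale homogeneous_poisson =
  fixes M :: "'a measure" and lam :: real and N :: "real \<Rightarrow> 'a \<Rightarrow> real"
  assumes poisson_process: "poisson_process M lam N"
begin

sublocale prob_space M
  using poisson_process by (simp add: poisson_process_def)

lemma lam_pos: "0 < lam"
  using poisson_process by (simp add: poisson_process_def)

lemma measurable_N [measurable]: "N s \<in> borel_measurable M"
  using poisson_process by (simp add: poisson_process_def)

lemma N_0: "\<omega> \<in> space M \<Longrightarrow> N 0 \<omega> = 0"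
  using poisson_process by (simp add: poisson_process_def)

lemma N_Nats: "\<omega> \<in> space M \<Longrightarrow> N s \<omega> \<in> \<nat>"
  using poisson_process by (simp add: poisson_process_def)

lemma mono_N: "\<omega> \<in> space M \<Longrightarrow> mono_on {0..} (\<lambda>s. N s \<omega>)"
  using poisson_process by (simp add: poisson_process_def)

lemma continuous_at_right_N: "\<omega> \<in> space M \<Longrightarrow> 0 \<le> s \<Longrightarrow> continuous (at_right s) (\<lambda>r. N r \<omega>)"
  using poisson_process by (simp add: poisson_process_def)

lemma prob_N_eq:
  assumes "0 < s"
  shows "prob {\<omega>\<in>space M. N s \<omega> = real j} = (lam * s) ^ j / fact j * exp (- (lam * s))"
proof -
  have "prob {\<omega>\<in>space M. N s \<omega> - N 0 \<omega> = real j} = (lam * (s - 0)) ^ j / fact j * exp (- (lam * (s - 0)))"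
    using poisson_process assms unfolding poisson_process_def by blast
  moreover have "{\<omega>\<in>space M. N s \<omega> - N 0 \<omega> = real j} = {\<omega>\<in>space M. N s \<omega> = real j}"
    using N_0 by auto
  ultimately show ?thesis by simp
qed

lemma exp_N_eq_suminf:
  assumes "\<omega> \<in> space M"
  shows "ennreal (exp (\<theta> * N s \<omega>)) = (\<Sum>j. ennreal (exp (\<theta> * real j)) * indicator {\<omega>\<in>space M. N s \<omega> = real j} \<omega>)"
proof -
  obtain j\<^sub>0 :: nat where j\<^sub>0: "N s \<omega> = real j\<^sub>0" using N_Nats[OF assms] by (auto elim: Nats_cases)
  have "(\<Sum>j. ennreal (exp (\<theta> * real j)) * indicator {\<omega>\<in>space M. N s \<omega> = real j} \<omega>)
      = (\<Sum>j\<in>{j\<^sub>0}. ennreal (exp (\<theta> * real j)) * indicator {\<omega>\<in>space M. N s \<omega> = real j} \<omega>)"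
    by (rule suminf_finite) (use j\<^sub>0 in auto)
  then show ?thesis using j\<^sub>0 assms by simp
qed

lemma nn_integral_exp_N:
  "(\<integral>\<^sup>+\<omega>. ennreal (exp (\<theta> * N (real k) \<omega>)) \<partial>M) = ennreal (exp (lam * real k * (exp \<theta> - 1)))"
proof (cases "k = 0")
  case True
  then have "(\<integral>\<^sup>+\<omega>. ennreal (exp (\<theta> * N (real k) \<omega>)) \<partial>M) = (\<integral>\<^sup>+\<omega>. 1 \<partial>M)"
    by (intro nn_integral_cong) (simp add: N_0)
  then show ?thesis using True by (simp add: emeasure_space_1)
next
  case False
  define s where "s = real k"
  have "0 < s" using False by (simp add: s_def)
  have "(\<integral>\<^sup>+\<omega>. ennreal (exp (\<theta> * N s \<omega>)) \<partial>M)
     = (\<integral>\<^sup>+\<omega>. (\<Sum>j. ennreal (exp (\<theta> * real j)) * indicator {\<omega>\<in>space M. N s \<omega> = real j} \<omega>) \<partial>M)"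
    by (intro nn_integral_cong exp_N_eq_suminf)
  also have "\<dots> = (\<Sum>j. ennreal (exp (\<theta> * real j)) * emeasure M {\<omega>\<in>space M. N s \<omega> = real j})"
    by (simp add: nn_integral_suminf nn_integral_cmult_indicator)
  also have "\<dots> = (\<Sum>j. ennreal (exp (- (lam * s)) * ((exp \<theta> * (lam * s)) ^ j / fact j)))"
  proof (rule suminf_cong)
    fix j
    have "ennreal (exp (\<theta> * real j)) * emeasure M {\<omega>\<in>space M. N s \<omega> = real j}
        = ennreal (exp (\<theta> * real j)) * ennreal ((lam * s) ^ j / fact j * exp (- (lam * s)))"
      using \<open>0 < s\<close> by (simp add: emeasure_eq_measure prob_N_eq)
    also have "\<dots> = ennreal (exp (\<theta> * real j) * ((lam * s) ^ j / fact j * exp (- (lam * s))))"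
      using \<open>0 < s\<close> lam_pos by (intro ennreal_mult[symmetric]) auto
    also have "exp (\<theta> * real j) * ((lam * s) ^ j / fact j * exp (- (lam * s)))
        = exp (- (lam * s)) * ((exp \<theta> * (lam * s)) ^ j / fact j)"
      by (simp add: exp_of_nat_mult[symmetric] power_mult_distrib mult.commute)
    finally show "ennreal (exp (\<theta> * real j)) * emeasure M {\<omega>\<in>space M. N s \<omega> = real j}
        = ennreal (exp (- (lam * s)) * ((exp \<theta> * (lam * s)) ^ j / fact j))" .
  qed
  also have "\<dots> = ennreal (exp (- (lam * s)) * exp (exp \<theta> * (lam * s)))"
  proof (rule suminf_ennreal_eq)
    show "(\<lambda>j. exp (- (lam * s)) * ((exp \<theta> * (lam * s)) ^ j / fact j)) sums (exp (- (lam * s)) * exp (exp \<theta> * (lam * s)))"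
      using exp_converges[of "exp \<theta> * (lam * s)"] by (intro sums_mult) (simp add: field_simps)
  qed (use \<open>0 < s\<close> lam_pos in simp)
  also have "exp (- (lam * s)) * exp (exp \<theta> * (lam * s)) = exp (lam * real k * (exp \<theta> - 1))"
    by (simp add: s_def exp_add[symmetric] algebra_simps)
  finally show ?thesis by (simp add: s_def)
qed

end

abbreviation path_space :: "(real \<Rightarrow> real) measure" where
  "path_space \<equiv> Pi\<^sub>M {0..} (\<lambda>_. borel)"

lemma measurable_path_eval [measurable]: "0 \<le> r \<Longrightarrow> (\<lambda>f. f r) \<in> borel_measurable path_space"
  by (rule measurable_component_singleton) simp

lemma measurable_passage_ceiling [measurable]:
  "(\<lambda>f. passage_ceiling f t) \<in> measurable path_space (count_space UNIV)"
  unfolding passage_ceiling_def by measurable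

locale fractional_poisson =
  homogeneous_poisson M lam N + inverse_stable_subordinator M \<nu> D
  for M :: "'a measure" and lam N \<nu> D +
  assumes indep_paths: "prob_space.indep_var M path_space (\<lambda>\<omega>. restrict (\<lambda>s. N s \<omega>) {0..})
    path_space (\<lambda>\<omega>. restrict (\<lambda>s. D s \<omega>) {0..})"
begin

lemma measurable_N_L [measurable]: "(\<lambda>\<omega>. N (L t \<omega>) \<omega>) \<in> borel_measurable M"
proof (rule measurable_at_random_time[OF measurable_N measurable_L continuous_at_right_N, where c = "Inf {}"])
  fix \<omega> assume "\<omega> \<in> space M" "L t \<omega> < 0"
  then show "L t \<omega> = Inf {}" using L_stuck L_nonneg by (cases "\<omega> \<in> stuck t") force+
qed

lemma mult_N_L_grid_bounds:
  assumes "\<omega> \<in> space M" "\<omega> \<notin> stuck t"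
  shows "\<theta> * N (L t \<omega>) \<omega> \<le> \<theta> * N (real (grid_point (0 \<le> \<theta>) (L_ceiling t \<omega>))) \<omega>"
    and "\<theta> * N (real (grid_point (\<theta> \<le> 0) (L_ceiling t \<omega>))) \<omega> \<le> \<theta> * N (L t \<omega>) \<omega>"
proof -
  have "N (real (L_ceiling t \<omega> - 1)) \<omega> \<le> N (L t \<omega>) \<omega>" "N (L t \<omega>) \<omega> \<le> N (real (L_ceiling t \<omega>)) \<omega>"
    using L_ceiling_bounds[OF assms] L_nonneg[OF assms] by (auto intro: mono_onD[OF mono_N[OF assms(1)]])
  then show "\<theta> * N (L t \<omega>) \<omega> \<le> \<theta> * N (real (grid_point (0 \<le> \<theta>) (L_ceiling t \<omega>))) \<omega>"
    and "\<theta> * N (real (grid_point (\<theta> \<le> 0) (L_ceiling t \<omega>))) \<omega> \<le> \<theta> * N (L t \<omega>) \<omega>"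
    by (auto simp: grid_point_def intro: mult_left_mono mult_left_mono_neg)
qed

text \<open>Conditioning on the subordinator path: given \<open>L_ceiling t = k\<close>, the Poisson count at the
  integer time \<open>k\<close> has moment generating function \<open>exp (lam k (exp \<theta> - 1))\<close>.\<close>

lemma nn_integral_exp_N_grid:
  "(\<integral>\<^sup>+\<omega>. ennreal (exp (\<theta> * N (real (grid_point up (L_ceiling t \<omega>))) \<omega>)) \<partial>M)
    = mgf_L_grid up t (lam * (exp \<theta> - 1))"
proof -
  define K where "K \<omega> = grid_point up (L_ceiling t \<omega>)" for \<omega>
  have [measurable]: "K \<in> measurable M (count_space UNIV)"
    unfolding K_def passage_ceiling_def by measurable
  have single: "F (K \<omega>) = (\<Sum>k. if K \<omega> = k then F k else 0)" for F :: "nat \<Rightarrow> ennreal" and \<omega>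
    by (subst suminf_finite[of "{K \<omega>}"]) auto
  have if_const: "(\<integral>\<^sup>+\<omega>. (if K \<omega> = k then c else 0) \<partial>M) = c * emeasure M {\<omega>\<in>space M. K \<omega> = k}" for c k
    by (subst nn_integral_cmult_indicator[symmetric]) (auto intro!: nn_integral_cong simp: indicator_def)
  have slice: "(\<integral>\<^sup>+\<omega>. (if K \<omega> = k then ennreal (exp (\<theta> * N (real k) \<omega>)) else 0) \<partial>M)
     = ennreal (exp (lam * real k * (exp \<theta> - 1))) * emeasure M {\<omega>\<in>space M. K \<omega> = k}" for k
  proof -
    define H where "H f = (if grid_point up (passage_ceiling f t) = k then 1 else (0::real))" for f
    have "indep_var borel ((\<lambda>f. exp (\<theta> * f (real k))) \<circ> (\<lambda>\<omega>. restrict (\<lambda>s. N s \<omega>) {0..}))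
        borel (H \<circ> (\<lambda>\<omega>. restrict (\<lambda>s. D s \<omega>) {0..}))"
      by (rule indep_var_compose[OF indep_paths]) (unfold H_def, measurable)
    then have "indep_var borel (\<lambda>\<omega>. exp (\<theta> * N (real k) \<omega>)) borel (\<lambda>\<omega>. if K \<omega> = k then 1 else 0)"
      by (simp add: comp_def H_def K_def passage_ceiling_restrict)
    then have "(\<integral>\<^sup>+\<omega>. ennreal (exp (\<theta> * N (real k) \<omega>) * (if K \<omega> = k then 1 else 0)) \<partial>M)
        = (\<integral>\<^sup>+\<omega>. ennreal (exp (\<theta> * N (real k) \<omega>)) \<partial>M) * (\<integral>\<^sup>+\<omega>. ennreal (if K \<omega> = k then 1 else 0) \<partial>M)"
      by (rule indep_var_nn_integral_mult) auto
    moreover have "(\<integral>\<^sup>+\<omega>. ennreal (if K \<omega> = k then 1 else 0) \<partial>M) = (\<integral>\<^sup>+\<omega>. (if K \<omega> = k then 1 else 0) \<partial>M)"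
      by (intro nn_integral_cong) simp
    ultimately have "(\<integral>\<^sup>+\<omega>. ennreal (exp (\<theta> * N (real k) \<omega>) * (if K \<omega> = k then 1 else 0)) \<partial>M)
        = (\<integral>\<^sup>+\<omega>. ennreal (exp (\<theta> * N (real k) \<omega>)) \<partial>M) * emeasure M {\<omega>\<in>space M. K \<omega> = k}"
      using if_const[of k 1] by simp
    moreover have "(\<integral>\<^sup>+\<omega>. (if K \<omega> = k then ennreal (exp (\<theta> * N (real k) \<omega>)) else 0) \<partial>M)
        = (\<integral>\<^sup>+\<omega>. ennreal (exp (\<theta> * N (real k) \<omega>) * (if K \<omega> = k then 1 else 0)) \<partial>M)"
      by (intro nn_integral_cong) simp
    ultimately show ?thesis
      by (simp add: nn_integral_exp_N mult.commute)
  qed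
  have "(\<integral>\<^sup>+\<omega>. ennreal (exp (\<theta> * N (real (K \<omega>)) \<omega>)) \<partial>M)
      = (\<integral>\<^sup>+\<omega>. (\<Sum>k. if K \<omega> = k then ennreal (exp (\<theta> * N (real k) \<omega>)) else 0) \<partial>M)"
    by (subst single) simp
  also have "\<dots> = (\<Sum>k. ennreal (exp (lam * real k * (exp \<theta> - 1))) * emeasure M {\<omega>\<in>space M. K \<omega> = k})"
    by (simp add: nn_integral_suminf slice)
  also have "\<dots> = (\<integral>\<^sup>+\<omega>. (\<Sum>k. if K \<omega> = k then ennreal (exp (lam * (exp \<theta> - 1) * real k)) else 0) \<partial>M)"
    by (simp add: nn_integral_suminf if_const algebra_simps)
  also have "\<dots> = mgf_L_grid up t (lam * (exp \<theta> - 1))"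
    unfolding mgf_L_grid_def K_def[symmetric] by (subst single) simp
  finally show ?thesis by (simp add: K_def)
qed

end

section \<open>The fractional Skellam process\<close>

locale fractional_skellam =
  fixes M :: "'a measure" and N\<^sub>1 N\<^sub>2 D\<^sub>1 D\<^sub>2 :: "real \<Rightarrow> 'a \<Rightarrow> real" and lam\<^sub>1 lam\<^sub>2 \<nu>\<^sub>1 \<nu>\<^sub>2 :: real
  assumes \<nu>: "0 < \<nu>\<^sub>1" "\<nu>\<^sub>1 < 1" "0 < \<nu>\<^sub>2" "\<nu>\<^sub>2 < 1"
    and poisson: "poisson_process M lam\<^sub>1 N\<^sub>1" "poisson_process M lam\<^sub>2 N\<^sub>2"
    and stable: "stable_subordinator M \<nu>\<^sub>1 D\<^sub>1" "stable_subordinator M \<nu>\<^sub>2 D\<^sub>2"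
    and indep: "prob_space.indep_vars M (\<lambda>_. path_space)
      (\<lambda>i \<omega>. restrict (\<lambda>t. ([N\<^sub>1, N\<^sub>2, D\<^sub>1, D\<^sub>2] ! i) t \<omega>) {0..}) {0..<4}"
begin

abbreviation path :: "nat \<Rightarrow> 'a \<Rightarrow> real \<Rightarrow> real" where
  "path i \<omega> \<equiv> restrict (\<lambda>t. ([N\<^sub>1, N\<^sub>2, D\<^sub>1, D\<^sub>2] ! i) t \<omega>) {0..}"

sublocale fp\<^sub>1: fractional_poisson M lam\<^sub>1 N\<^sub>1 \<nu>\<^sub>1 D\<^sub>1
proof -
  have "prob_space M" using poisson(1) by (simp add: poisson_process_def)
  then show "fractional_poisson M lam\<^sub>1 N\<^sub>1 \<nu>\<^sub>1 D\<^sub>1"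
    using poisson(1) stable(1) \<nu> prob_space.indep_vars_imp_indep_var[OF _ indep, of 0 2]
    by (simp add: fractional_poisson_def fractional_poisson_axioms_def homogeneous_poisson_def
        inverse_stable_subordinator_def)
qed

sublocale fp\<^sub>2: fractional_poisson M lam\<^sub>2 N\<^sub>2 \<nu>\<^sub>2 D\<^sub>2
proof -
  have "prob_space M" using poisson(1) by (simp add: poisson_process_def)
  then show "fractional_poisson M lam\<^sub>2 N\<^sub>2 \<nu>\<^sub>2 D\<^sub>2"
    using poisson(2) stable(2) \<nu> prob_space.indep_vars_imp_indep_var[OF _ indep, of 1 3]
    by (simp add: fractional_poisson_def fractional_poisson_axioms_def homogeneous_poisson_def
        inverse_stable_subordinator_def)
qed

definition Y :: "real \<Rightarrow> 'a \<Rightarrow> real" where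
  "Y t \<omega> = N\<^sub>1 (fp\<^sub>1.L t \<omega>) \<omega> - N\<^sub>2 (fp\<^sub>2.L t \<omega>) \<omega>"

lemma measurable_Y [measurable]: "Y t \<in> borel_measurable M"
  unfolding Y_def by measurable

lemma exp_moment_grid_product:
  "(\<integral>\<^sup>+\<omega>. ennreal (exp (\<theta> * N\<^sub>1 (real (grid_point up\<^sub>1 (fp\<^sub>1.L_ceiling t \<omega>))) \<omega>
      + (- \<theta>) * N\<^sub>2 (real (grid_point up\<^sub>2 (fp\<^sub>2.L_ceiling t \<omega>))) \<omega>)) \<partial>M)
   = fp\<^sub>1.mgf_L_grid up\<^sub>1 t (lam\<^sub>1 * (exp \<theta> - 1)) * fp\<^sub>2.mgf_L_grid up\<^sub>2 t (lam\<^sub>2 * (exp (- \<theta>) - 1))"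
proof -
  define F where "F i j up \<theta>' = (\<lambda>h :: nat \<Rightarrow> real \<Rightarrow> real. exp (\<theta>' * (h i) (real (grid_point up (passage_ceiling (h j) t)))))"
    for i j :: nat and up \<theta>'
  have F_measurable: "F i j up \<theta>' \<in> borel_measurable (Pi\<^sub>M {i, j} (\<lambda>_. path_space))" for i j up \<theta>'
  proof -
    have [measurable]: "(\<lambda>h. h i) \<in> measurable (Pi\<^sub>M {i, j} (\<lambda>_. path_space)) path_space"
      "(\<lambda>h. h j) \<in> measurable (Pi\<^sub>M {i, j} (\<lambda>_. path_space)) path_space"
      by (auto intro: measurable_component_singleton)
    have "(\<lambda>h. (\<lambda>k h. exp (\<theta>' * (h i) (real k))) (grid_point up (passage_ceiling (h j) t)) h)
        \<in> borel_measurable (Pi\<^sub>M {i, j} (\<lambda>_. path_space))"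
      by (rule measurable_compose_countable) measurable
    then show ?thesis unfolding F_def by simp
  qed
  have "prob_space.indep_var M (Pi\<^sub>M {0::nat, 2} (\<lambda>_. path_space)) (\<lambda>\<omega>. restrict (\<lambda>i. path i \<omega>) {0, 2})
      (Pi\<^sub>M {1, 3} (\<lambda>_. path_space)) (\<lambda>\<omega>. restrict (\<lambda>i. path i \<omega>) {1, 3})"
    by (rule fp\<^sub>1.indep_var_restrict[OF indep]) auto
  then have "fp\<^sub>1.indep_var borel (F 0 2 up\<^sub>1 \<theta> \<circ> (\<lambda>\<omega>. restrict (\<lambda>i. path i \<omega>) {0, 2}))
      borel (F 1 3 up\<^sub>2 (- \<theta>) \<circ> (\<lambda>\<omega>. restrict (\<lambda>i. path i \<omega>) {1, 3}))"
    by (rule fp\<^sub>1.indep_var_compose[OF _ F_measurable F_measurable])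
  then have "fp\<^sub>1.indep_var borel (\<lambda>\<omega>. exp (\<theta> * N\<^sub>1 (real (grid_point up\<^sub>1 (fp\<^sub>1.L_ceiling t \<omega>))) \<omega>))
      borel (\<lambda>\<omega>. exp (- \<theta> * N\<^sub>2 (real (grid_point up\<^sub>2 (fp\<^sub>2.L_ceiling t \<omega>))) \<omega>))"
    by (simp add: F_def comp_def passage_ceiling_restrict)
  then have "(\<integral>\<^sup>+\<omega>. ennreal (exp (\<theta> * N\<^sub>1 (real (grid_point up\<^sub>1 (fp\<^sub>1.L_ceiling t \<omega>))) \<omega>)
        * exp (- \<theta> * N\<^sub>2 (real (grid_point up\<^sub>2 (fp\<^sub>2.L_ceiling t \<omega>))) \<omega>)) \<partial>M)
      = (\<integral>\<^sup>+\<omega>. ennreal (exp (\<theta> * N\<^sub>1 (real (grid_point up\<^sub>1 (fp\<^sub>1.L_ceiling t \<omega>))) \<omega>)) \<partial>M)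
      * (\<integral>\<^sup>+\<omega>. ennreal (exp (- \<theta> * N\<^sub>2 (real (grid_point up\<^sub>2 (fp\<^sub>2.L_ceiling t \<omega>))) \<omega>)) \<partial>M)"
    by (rule fp\<^sub>1.indep_var_nn_integral_mult) auto
  then show ?thesis
    by (simp only: exp_add fp\<^sub>1.nn_integral_exp_N_grid fp\<^sub>2.nn_integral_exp_N_grid)
qed

lemma has_exp_rate_exp_moment_Y:
  "has_exp_rate (\<lambda>t. \<integral>\<^sup>+\<omega>. ennreal (exp (\<theta> * Y t \<omega>)) \<partial>M) (Psi1 \<nu>\<^sub>1 \<nu>\<^sub>2 lam\<^sub>1 lam\<^sub>2 \<theta>)"
proof -
  define c\<^sub>1 where "c\<^sub>1 = lam\<^sub>1 * (exp \<theta> - 1)"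
  define c\<^sub>2 where "c\<^sub>2 = lam\<^sub>2 * (exp (- \<theta>) - 1)"
  have rate: "max 0 c\<^sub>1 powr (1 / \<nu>\<^sub>1) + max 0 c\<^sub>2 powr (1 / \<nu>\<^sub>2) = Psi1 \<nu>\<^sub>1 \<nu>\<^sub>2 lam\<^sub>1 lam\<^sub>2 \<theta>"
    using fp\<^sub>1.lam_pos fp\<^sub>2.lam_pos
    by (cases "0 \<le> \<theta>") (auto simp: Psi1_def c\<^sub>1_def c\<^sub>2_def max_def mult_le_0_iff zero_le_mult_iff)
  have Y_eq: "\<theta> * Y t \<omega> = \<theta> * N\<^sub>1 (fp\<^sub>1.L t \<omega>) \<omega> + (- \<theta>) * N\<^sub>2 (fp\<^sub>2.L t \<omega>) \<omega>" for t \<omega>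
    by (simp add: Y_def algebra_simps)
  have bounds: "exp (\<theta> * N\<^sub>1 (real (grid_point (\<theta> \<le> 0) (fp\<^sub>1.L_ceiling t \<omega>))) \<omega>
        + (- \<theta>) * N\<^sub>2 (real (grid_point (- \<theta> \<le> 0) (fp\<^sub>2.L_ceiling t \<omega>))) \<omega>) \<le> exp (\<theta> * Y t \<omega>)
      \<and> exp (\<theta> * Y t \<omega>) \<le> exp (\<theta> * N\<^sub>1 (real (grid_point (0 \<le> \<theta>) (fp\<^sub>1.L_ceiling t \<omega>))) \<omega>
        + (- \<theta>) * N\<^sub>2 (real (grid_point (0 \<le> - \<theta>) (fp\<^sub>2.L_ceiling t \<omega>))) \<omega>)"
    if "\<omega> \<in> space M" "\<omega> \<notin> fp\<^sub>1.stuck t" "\<omega> \<notin> fp\<^sub>2.stuck t" for t \<omega>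
    using fp\<^sub>1.mult_N_L_grid_bounds[OF that(1,2), of \<theta>] fp\<^sub>2.mult_N_L_grid_bounds[OF that(1,3), of "- \<theta>"]
    unfolding exp_le_cancel_iff Y_eq by linarith
  show ?thesis
  proof (rule has_exp_rate_squeeze)
    show "has_exp_rate (\<lambda>t. fp\<^sub>1.mgf_L_grid (\<theta> \<le> 0) t c\<^sub>1 * fp\<^sub>2.mgf_L_grid (- \<theta> \<le> 0) t c\<^sub>2) (Psi1 \<nu>\<^sub>1 \<nu>\<^sub>2 lam\<^sub>1 lam\<^sub>2 \<theta>)"
      "has_exp_rate (\<lambda>t. fp\<^sub>1.mgf_L_grid (0 \<le> \<theta>) t c\<^sub>1 * fp\<^sub>2.mgf_L_grid (0 \<le> - \<theta>) t c\<^sub>2) (Psi1 \<nu>\<^sub>1 \<nu>\<^sub>2 lam\<^sub>1 lam\<^sub>2 \<theta>)"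
      unfolding rate[symmetric] by (intro has_exp_rate_mult fp\<^sub>1.has_exp_rate_mgf_L_grid fp\<^sub>2.has_exp_rate_mgf_L_grid)+
    show "fp\<^sub>1.mgf_L_grid (\<theta> \<le> 0) t c\<^sub>1 * fp\<^sub>2.mgf_L_grid (- \<theta> \<le> 0) t c\<^sub>2 \<le> (\<integral>\<^sup>+\<omega>. ennreal (exp (\<theta> * Y t \<omega>)) \<partial>M)"
      "(\<integral>\<^sup>+\<omega>. ennreal (exp (\<theta> * Y t \<omega>)) \<partial>M) \<le> fp\<^sub>1.mgf_L_grid (0 \<le> \<theta>) t c\<^sub>1 * fp\<^sub>2.mgf_L_grid (0 \<le> - \<theta>) t c\<^sub>2"
      for t
      unfolding c\<^sub>1_def c\<^sub>2_def exp_moment_grid_product[symmetric]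
      using bounds[of _ t] fp\<^sub>1.AE_not_stuck[of t] fp\<^sub>2.AE_not_stuck[of t]
      by (auto intro!: nn_integral_mono_AE ennreal_leI elim!: AE_mp[OF AE_conjI, rotated])
  qed
qed

lemma cgf_limit_Y: "cgf_limit M Y (Psi1 \<nu>\<^sub>1 \<nu>\<^sub>2 lam\<^sub>1 lam\<^sub>2)"
proof
  fix \<theta>
  note rate = has_exp_rate_exp_moment_Y[of \<theta>]
  have integrable: "integrable M (\<lambda>\<omega>. exp (\<theta> * Y t \<omega>))"
    if "(\<integral>\<^sup>+\<omega>. ennreal (exp (\<theta> * Y t \<omega>)) \<partial>M) < \<top>" for t
    using that by (intro integrableI_bounded) auto
  show "\<forall>\<^sub>F t in at_top. integrable M (\<lambda>\<omega>. exp (\<theta> * Y t \<omega>))"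
    using has_exp_rate_eventually_finite[OF rate] by (rule eventually_mono) (rule integrable)
  have "\<forall>\<^sub>F t in at_top. ln (enn2real (\<integral>\<^sup>+\<omega>. ennreal (exp (\<theta> * Y t \<omega>)) \<partial>M)) / t
      = ln (\<integral>\<omega>. exp (\<theta> * Y t \<omega>) \<partial>M) / t"
    using has_exp_rate_eventually_finite[OF rate]
    by (rule eventually_mono) (simp add: integral_eq_nn_integral integrable)
  with has_exp_rate_ln_tendsto[OF rate]
  show "((\<lambda>t. ln (\<integral>\<omega>. exp (\<theta> * Y t \<omega>) \<partial>M) / t) \<longlongrightarrow> Psi1 \<nu>\<^sub>1 \<nu>\<^sub>2 lam\<^sub>1 lam\<^sub>2 \<theta>) at_top"
    by (rule Lim_transform_eventually)
qed simp

end

theorem proposition3p1: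
  fixes M :: "'a measure"
    and N1 N2 D1 D2 :: "real \<Rightarrow> 'a \<Rightarrow> real"
    and lam1 lam2 nu1 nu2 :: real
  assumes "prob_space M"
    and "0 < lam1" "0 < lam2"
    and "0 < nu1" "nu1 < 1" "0 < nu2" "nu2 < 1"
    and "poisson_process M lam1 N1" "poisson_process M lam2 N2"
    and "stable_subordinator M nu1 D1" "stable_subordinator M nu2 D2"
    and "prob_space.indep_vars M (\<lambda>_. Pi\<^sub>M {0..} (\<lambda>_. borel))
           (\<lambda>i \<omega>. restrict (\<lambda>t. ([N1, N2, D1, D2] ! i) t \<omega>) {0..}) {0..<4}"
  shows "LDP M (\<lambda>t \<omega>. (N1 (inverse_subordinator D1 t \<omega>) \<omega>
                        - N2 (inverse_subordinator D2 t \<omega>) \<omega>) / t)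
             (\<lambda>t. t) (I_LD1 nu1 nu2 lam1 lam2)
       \<and> good_rate_function (I_LD1 nu1 nu2 lam1 lam2)"
proof -
  interpret fractional_skellam M N1 N2 D1 D2 lam1 lam2 nu1 nu2
    by unfold_locales (use assms in auto)
  interpret cgf_limit M Y "Psi1 nu1 nu2 lam1 lam2"
    by (rule cgf_limit_Y)
  have "LDP M (\<lambda>t \<omega>. Y t \<omega> / t) (\<lambda>t. t) (legendre_transform (Psi1 nu1 nu2 lam1 lam2))"
    using Psi1_nonneg Psi1_deriv_surj assms(2-7) by (intro gartner_ellis) auto
  moreover have "I_LD1 nu1 nu2 lam1 lam2 = legendre_transform (Psi1 nu1 nu2 lam1 lam2)"
    by (simp add: fun_eq_iff I_LD1_def legendre_transform_def)
  ultimately show ?thesis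
    using good_rate_function_legendre_transform by (simp add: Y_def)
qed

end
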